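(* If $\Gamma$ is a finite vertex-transitive graph with $\operatorname{Aut}(\Gamma)\cong A_5$, then the action of $\operatorname{Aut}(\Gamma)$ on $V(\Gamma)$ is imprimitive.
   Context: For $G$ transitive on $X$, a block is $B\subset X$ with $gB=B$ or $gB\cap B=\emptyset$ for all $g\in G$; it is nontrivial if $1<|B|<|X|$; the action is imprimitive if a nontrivial block exists and primitive otherwise. $A_5$ is the alternating group on $5$ letters. *)

theory Defs
  imports "HOL-Algebra.Sym_Groups"
begin

definition simple_graph :: "'a set \<Rightarrow> ('a \<Rightarrow> 'a \<Rightarrow> bool) \<Rightarrow> bool" where
  "simple_graph V E \<longleftrightarrow>
     (\<forall>u v. E u v \<longrightarrow> u \<in> V \<and> v \<in> V) \<and>
     (\<forall>u v. E u v \<longrightarrow> E v u) \<and> (\<forall>v. \<not> E v v)"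

definition graph_auts :: "'a set \<Rightarrow> ('a \<Rightarrow> 'a \<Rightarrow> bool) \<Rightarrow> ('a \<Rightarrow> 'a) set" where
  "graph_auts V E = {g. g permutes V \<and> (\<forall>u\<in>V. \<forall>v\<in>V. E (g u) (g v) \<longleftrightarrow> E u v)}"

definition Aut :: "'a set \<Rightarrow> ('a \<Rightarrow> 'a \<Rightarrow> bool) \<Rightarrow> ('a \<Rightarrow> 'a) monoid" where
  "Aut V E = \<lparr> carrier = graph_auts V E, monoid.mult = (\<circ>), one = id \<rparr>"

definition vertex_transitive :: "'a set \<Rightarrow> ('a \<Rightarrow> 'a \<Rightarrow> bool) \<Rightarrow> bool" where
  "vertex_transitive V E \<longleftrightarrow> (\<forall>u\<in>V. \<forall>v\<in>V. \<exists>g\<in>graph_auts V E. g u = v)"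

definition is_block :: "('a \<Rightarrow> 'a) set \<Rightarrow> 'a set \<Rightarrow> 'a set \<Rightarrow> bool" where
  "is_block G X B \<longleftrightarrow> B \<subseteq> X \<and> (\<forall>g\<in>G. g ` B = B \<or> g ` B \<inter> B = {})"

definition imprimitive :: "('a \<Rightarrow> 'a) set \<Rightarrow> 'a set \<Rightarrow> bool" where
  "imprimitive G X \<longleftrightarrow> (\<exists>B. is_block G X B \<and> 1 < card B \<and> card B < card X)"

end

theory Submission
  imports Defs "HOL-Algebra.Group_Action" "HOL-Computational_Algebra.Primes"
begin

section \<open>Permutation groups\<close>

definition perm_monoid :: "('a \<Rightarrow> 'a) set \<Rightarrow> ('a \<Rightarrow> 'a) monoid" where
  "perm_monoid H = \<lparr>carrier = H, monoid.mult = (\<circ>), one = id\<rparr>"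

definition orb :: "('a \<Rightarrow> 'a) set \<Rightarrow> 'a \<Rightarrow> 'a set" where
  "orb H x = (\<lambda>h. h x) ` H"

definition stab :: "('a \<Rightarrow> 'a) set \<Rightarrow> 'a \<Rightarrow> ('a \<Rightarrow> 'a) set" where
  "stab H x = {h \<in> H. h x = x}"

definition fix_points :: "'a set \<Rightarrow> ('a \<Rightarrow> 'a) \<Rightarrow> 'a set" where
  "fix_points X h = {x \<in> X. h x = x}"

definition common_fix_points :: "'a set \<Rightarrow> ('a \<Rightarrow> 'a) set \<Rightarrow> 'a set" where
  "common_fix_points X H = {x \<in> X. \<forall>h\<in>H. h x = x}"

lemma perm_monoid_funpow: "x [^]\<^bsub>perm_monoid H\<^esub> (n::nat) = x ^^ n"
  by (induction n) (simp_all add: perm_monoid_def funpow_Suc_right del: funpow.simps)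

lemma card_fix_points_less:
  assumes "finite X" "g permutes X" "g \<noteq> id"
  shows "card (fix_points X g) < card X"
proof -
  have "fix_points X g \<noteq> X"
    using assms(2,3) by (auto simp: fix_points_def fun_eq_iff dest: permutes_not_in)
  thus ?thesis
    using assms(1) by (intro psubset_card_mono) (auto simp: fix_points_def)
qed

locale perm_group =
  fixes X :: "'a set" and H :: "('a \<Rightarrow> 'a) set"
  assumes permutes: "h \<in> H \<Longrightarrow> h permutes X"
    and id_mem: "id \<in> H"
    and comp_mem: "g \<in> H \<Longrightarrow> h \<in> H \<Longrightarrow> g \<circ> h \<in> H"
    and inv_mem: "h \<in> H \<Longrightarrow> Hilbert_Choice.inv h \<in> H"
begin

lemma image_mem: "h \<in> H \<Longrightarrow> x \<in> X \<Longrightarrow> h x \<in> X"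
  using permutes_in_image[OF permutes] by blast

lemma inv_apply: "h \<in> H \<Longrightarrow> Hilbert_Choice.inv h (h x) = x"
  using permutes_inverses(2)[OF permutes] .

lemma apply_inv: "h \<in> H \<Longrightarrow> h (Hilbert_Choice.inv h x) = x"
  using permutes_inverses(1)[OF permutes] .

lemma apply_eq_iff: "h \<in> H \<Longrightarrow> h x = h y \<longleftrightarrow> x = y"
  using permutes_inj[OF permutes] by (metis injD)

lemma group: "group (perm_monoid H)"
proof (rule groupI)
  fix x assume "x \<in> carrier (perm_monoid H)"
  hence "x \<in> H" by (simp add: perm_monoid_def)
  thus "\<exists>y\<in>carrier (perm_monoid H). y \<otimes>\<^bsub>perm_monoid H\<^esub> x = \<one>\<^bsub>perm_monoid H\<^esub>"
    using inv_mem permutes_inv_o(2)[OF permutes] by (auto simp: perm_monoid_def)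
qed (simp_all add: perm_monoid_def id_mem comp_mem o_assoc)

lemma restrict_mem_Bij: "h \<in> H \<Longrightarrow> restrict h X \<in> Bij X"
  using permutes_imp_bij[OF permutes] by (simp add: Bij_def bij_betw_cong[of X "restrict h X" h])

lemma group_action: "group_action (perm_monoid H) X (\<lambda>h. restrict h X)"
  unfolding group_action_def group_hom_def
proof (intro conjI group group_BijGroup group_hom_axioms.intro homI)
  fix h assume "h \<in> carrier (perm_monoid H)"
  thus "restrict h X \<in> carrier (BijGroup X)"
    using restrict_mem_Bij by (simp add: perm_monoid_def BijGroup_def)
next
  fix g h assume "g \<in> carrier (perm_monoid H)" "h \<in> carrier (perm_monoid H)"
  hence gh: "g \<in> H" "h \<in> H" by (simp_all add: perm_monoid_def)
  have "compose X (restrict g X) (restrict h X) = restrict (g \<circ> h) X"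
    using image_mem[OF gh(2)] by (auto simp: compose_def fun_eq_iff)
  thus "restrict (g \<otimes>\<^bsub>perm_monoid H\<^esub> h) X = restrict g X \<otimes>\<^bsub>BijGroup X\<^esub> restrict h X"
    using restrict_mem_Bij[OF gh(1)] restrict_mem_Bij[OF gh(2)]
    by (simp add: perm_monoid_def BijGroup_def)
qed

lemma card_orb_mult_card_stab:
  assumes "finite H" "x \<in> X"
  shows "card (orb H x) * card (stab H x) = card H"
proof -
  interpret group_action "perm_monoid H" X "\<lambda>h. restrict h X" by (rule group_action)
  have "orbit (perm_monoid H) (\<lambda>h. restrict h X) x = orb H x"
    "stabilizer (perm_monoid H) (\<lambda>h. restrict h X) x = stab H x"
    using assms(2) by (auto simp: orbit_def orb_def stabilizer_def stab_def perm_monoid_def)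
  thus ?thesis
    using orbit_stabilizer_theorem[OF assms(2)] by (simp add: order_def perm_monoid_def)
qed

lemma card_orbits_mult_card:
  assumes "finite H" "finite X"
  shows "card (orb H ` X) * card H = (\<Sum>h\<in>H. card (fix_points X h))"
proof -
  interpret group_action "perm_monoid H" X "\<lambda>h. restrict h X" by (rule group_action)
  have "orbits (perm_monoid H) X (\<lambda>h. restrict h X) = orb H ` X"
    by (auto simp: orbits_def orbit_def orb_def perm_monoid_def)
  moreover have "invariants X (\<lambda>h. restrict h X) h = fix_points X h" for h
    by (auto simp: invariants_def fix_points_def)
  ultimately show ?thesis
    using burnside assms by (simp add: order_def perm_monoid_def)
qed

lemma orb_subset: "x \<in> X \<Longrightarrow> orb H x \<subseteq> X"
  using image_mem by (auto simp: orb_def)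

lemma mem_orb_self: "x \<in> orb H x"
  unfolding orb_def by (rule image_eqI[of _ _ id]) (simp_all add: id_mem)

lemma orb_eq:
  assumes "y \<in> orb H x"
  shows "orb H y = orb H x"
proof -
  obtain h where h: "h \<in> H" "y = h x" using assms by (auto simp: orb_def)
  have "(\<lambda>g. g y) ` H = (\<lambda>g. g x) ` ((\<lambda>g. g \<circ> h) ` H)"
    by (simp add: h(2) image_image)
  also have "(\<lambda>g. g \<circ> h) ` H = H"
  proof
    show "(\<lambda>g. g \<circ> h) ` H \<subseteq> H" using comp_mem h(1) by blast
    show "H \<subseteq> (\<lambda>g. g \<circ> h) ` H"
    proof
      fix g assume g: "g \<in> H"
      have "g = (g \<circ> Hilbert_Choice.inv h) \<circ> h"
        using permutes_inv_o(2)[OF permutes[OF h(1)]] by (metis comp_id o_assoc)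
      thus "g \<in> (\<lambda>g. g \<circ> h) ` H" using comp_mem[OF g inv_mem[OF h(1)]] by blast
    qed
  qed
  finally show ?thesis by (simp add: orb_def)
qed

lemma orb_eq_or_disjoint: "orb H x = orb H y \<or> orb H x \<inter> orb H y = {}"
  using orb_eq by blast

lemma mem_orb_iff: "y \<in> orb H x \<longleftrightarrow> (\<exists>h\<in>H. h x = y)"
  by (auto simp: orb_def)

lemma mem_common_fix_points_iff:
  "x \<in> X \<Longrightarrow> x \<in> common_fix_points X H \<longleftrightarrow> orb H x = {x}"
  using mem_orb_self[of x] by (auto simp: common_fix_points_def orb_def)

lemma perm_group_stab: "perm_group X (stab H x)"
proof
  fix h assume "h \<in> stab H x"
  thus "Hilbert_Choice.inv h \<in> stab H x"
    using inv_mem inv_apply[of h x] by (auto simp: stab_def)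
qed (auto simp: stab_def permutes id_mem comp_mem)

lemma orb_subset_non_fixed:
  assumes "x \<in> X - common_fix_points X H"
  shows "orb H x \<subseteq> X - common_fix_points X H"
proof
  fix y assume y: "y \<in> orb H x"
  have "y \<notin> common_fix_points X H"
  proof
    assume "y \<in> common_fix_points X H"
    moreover have "y \<in> X" using y orb_subset assms by blast
    ultimately have "orb H x = {y}"
      using orb_eq[OF y] mem_common_fix_points_iff by simp
    thus False using mem_orb_self[of x] assms mem_common_fix_points_iff by auto
  qed
  thus "y \<in> X - common_fix_points X H" using y orb_subset assms by auto
qed

lemma dvd_card_non_fixed:
  assumes "finite X" "\<And>x. x \<in> X - common_fix_points X H \<Longrightarrow> d dvd card (orb H x)"
  shows "d dvd card (X - common_fix_points X H)"
proof -
  let ?O = "orb H ` (X - common_fix_points X H)"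
  have "\<Union>?O = X - common_fix_points X H"
    using orb_subset_non_fixed mem_orb_self by blast
  moreover have "card (\<Union>?O) = sum card ?O"
  proof (rule card_Union_disjoint)
    show "pairwise disjnt ?O"
      unfolding pairwise_def disjnt_def using orb_eq_or_disjoint by blast
    show "\<And>A. A \<in> ?O \<Longrightarrow> finite A"
      using orb_subset_non_fixed assms(1) by (blast intro: finite_subset)
  qed
  moreover have "d dvd sum card ?O" using assms(2) by (auto intro: dvd_sum)
  ultimately show ?thesis by simp
qed

lemma prime_dvd_card_non_fixed:
  assumes "finite X" "finite H" "prime p" "card H = p ^ k"
  shows "p dvd card (X - common_fix_points X H)"
proof (rule dvd_card_non_fixed[OF assms(1)])
  fix x assume x: "x \<in> X - common_fix_points X H"
  have "card (orb H x) dvd p ^ k"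
    using card_orb_mult_card_stab[OF assms(2)] x assms(4) by (metis DiffD1 dvd_triv_left)
  then obtain i where i: "card (orb H x) = p ^ i"
    using divides_primepow_nat[OF assms(3)] by blast
  have "orb H x \<noteq> {x}" using x mem_common_fix_points_iff by blast
  hence "card (orb H x) \<noteq> 1" using mem_orb_self[of x] by (metis card_1_singletonE singletonD)
  hence "i \<noteq> 0" using i by auto
  thus "p dvd card (orb H x)" using i by (simp add: dvd_power)
qed

end


locale transitive_perm_group = perm_group +
  assumes finite_X: "finite X"
    and orb_eq_X: "x \<in> X \<Longrightarrow> orb H x = X"
begin

lemma finite_H: "finite H"
  using finite_subset[OF _ finite_permutations[OF finite_X]] permutes by blast

lemma card_X_mult_card_stab: "x \<in> X \<Longrightarrow> card X * card (stab H x) = card H"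
  using card_orb_mult_card_stab[OF finite_H] orb_eq_X by simp

lemma card_stab_eq:
  assumes "x \<in> X" "y \<in> X"
  shows "card (stab H x) = card (stab H y)"
proof -
  have "card X \<noteq> 0" using assms(1) finite_X by auto
  thus ?thesis using card_X_mult_card_stab[OF assms(1)] card_X_mult_card_stab[OF assms(2)]
    by (metis mult_left_cancel)
qed

lemma stab_eq_if_common_fix_point:
  assumes "v \<in> X" "x \<in> common_fix_points X (stab H v)"
  shows "stab H x = stab H v"
proof -
  have "stab H v \<subseteq> stab H x" using assms(2) by (auto simp: common_fix_points_def stab_def)
  moreover have "finite (stab H x)" using finite_H by (simp add: stab_def)
  moreover have "x \<in> X" using assms(2) by (simp add: common_fix_points_def)
  ultimately show ?thesis using card_subset_eq card_stab_eq[OF assms(1)] by metis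
qed

text \<open>An element mapping one common fixed point of \<open>H\<^sub>v\<close> to another normalises \<open>H\<^sub>v\<close>,
  since both points have stabiliser \<open>H\<^sub>v\<close>; so it preserves the common fixed points.\<close>
lemma image_common_fix_points_subset:
  assumes "v \<in> X" and g: "g \<in> H"
    and x: "x \<in> common_fix_points X (stab H v)" "g x \<in> common_fix_points X (stab H v)"
  shows "g ` common_fix_points X (stab H v) \<subseteq> common_fix_points X (stab H v)"
proof
  fix y assume "y \<in> g ` common_fix_points X (stab H v)"
  then obtain u where u: "u \<in> common_fix_points X (stab H v)" "y = g u" by blast
  have "h (g u) = g u" if h: "h \<in> stab H v" for h
  proof -
    have "h \<in> H" "h (g x) = g x"
      using h stab_eq_if_common_fix_point[OF assms(1) x(2)] by (auto simp: stab_def)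
    hence "Hilbert_Choice.inv g \<circ> h \<circ> g \<in> stab H x"
      using g by (simp add: stab_def comp_mem inv_mem inv_apply)
    hence "(Hilbert_Choice.inv g \<circ> h \<circ> g) u = u"
      using stab_eq_if_common_fix_point[OF assms(1) x(1)] u(1) by (auto simp: common_fix_points_def)
    thus ?thesis using apply_inv[OF g] by (metis comp_apply)
  qed
  thus "y \<in> common_fix_points X (stab H v)"
    using u image_mem[OF g] by (auto simp: common_fix_points_def)
qed

lemma is_block_common_fix_points:
  assumes "v \<in> X"
  shows "is_block H X (common_fix_points X (stab H v))"
  unfolding is_block_def
proof (intro conjI ballI)
  let ?F = "common_fix_points X (stab H v)"
  show "?F \<subseteq> X" by (auto simp: common_fix_points_def)
  fix g assume g: "g \<in> H"
  show "g ` ?F = ?F \<or> g ` ?F \<inter> ?F = {}"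
  proof (cases "g ` ?F \<inter> ?F = {}")
    case False
    then obtain x where "x \<in> ?F" "g x \<in> ?F" by blast
    hence "g ` ?F \<subseteq> ?F" by (rule image_common_fix_points_subset[OF assms g])
    moreover have "card (g ` ?F) = card ?F"
      using permutes_inj[OF permutes[OF g]] by (simp add: card_image inj_on_def inj_def)
    moreover have "finite ?F" using finite_X by (simp add: common_fix_points_def)
    ultimately show ?thesis by (simp add: card_subset_eq)
  qed simp
qed

lemma imprimitive_if_common_fix_points:
  assumes "v \<in> X" "stab H v \<noteq> {id}" "2 \<le> card (common_fix_points X (stab H v))"
  shows "imprimitive H X"
proof -
  let ?F = "common_fix_points X (stab H v)"
  obtain h where h: "h \<in> stab H v" "h \<noteq> id"
    using assms(2) id_mem by (auto simp: stab_def)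
  have "?F \<noteq> X"
  proof
    assume "?F = X"
    hence "h x = x" for x
      using h(1) permutes_not_in[OF permutes] by (cases "x \<in> X") (auto simp: stab_def common_fix_points_def)
    thus False using h(2) by auto
  qed
  hence "card ?F < card X"
    using finite_X by (intro psubset_card_mono) (auto simp: common_fix_points_def)
  thus ?thesis
    using is_block_common_fix_points[OF assms(1)] assms(3) by (auto simp: imprimitive_def)
qed

lemma imprimitive_if_prime_power_stab:
  assumes "v \<in> X" "prime p" "card (stab H v) = p ^ k" "k \<noteq> 0" "\<not> p dvd card X - 1"
  shows "imprimitive H X"
proof (rule imprimitive_if_common_fix_points[OF assms(1)])
  let ?F = "common_fix_points X (stab H v)"
  have "p dvd card (X - ?F)"
    using perm_group.prime_dvd_card_non_fixed[OF perm_group_stab finite_X _ assms(2,3)] finite_H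
    by (simp add: stab_def)
  moreover have "card (X - ?F) = card X - card ?F"
    using finite_X by (intro card_Diff_subset) (auto simp: common_fix_points_def)
  moreover have "v \<in> ?F" using assms(1) by (simp add: common_fix_points_def stab_def)
  hence "card ?F \<noteq> 0" using finite_X by (auto simp: common_fix_points_def)
  ultimately show "2 \<le> card ?F" using assms(5) by (cases "card ?F = 1") auto
  have "1 < p ^ k" using one_less_power[OF prime_gt_1_nat[OF assms(2)]] assms(4) by simp
  thus "stab H v \<noteq> {id}" using assms(3) by auto
qed

lemma imprimitive_if_regular:
  assumes "card H = card X" "2 < card X" "t \<in> H" "t \<noteq> id" "t \<circ> t = id"
  shows "imprimitive H X"
proof -
  have stab_id: "stab H x = {id}" if "x \<in> X" for x
  proof -
    have "card X \<noteq> 0" using assms(2) by linarith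
    hence "card (stab H x) = 1"
      using card_X_mult_card_stab[OF that] assms(1) by (metis mult.right_neutral mult_left_cancel)
    then obtain a where "stab H x = {a}" by (rule card_1_singletonE)
    moreover have "id \<in> stab H x" using id_mem by (simp add: stab_def)
    ultimately show ?thesis by simp
  qed
  have regular: "g = h" if "g \<in> H" "h \<in> H" "x \<in> X" "g x = h x" for g h x
  proof -
    have "Hilbert_Choice.inv h \<circ> g \<in> stab H x"
      using that by (simp add: stab_def comp_mem inv_mem inv_apply)
    hence "Hilbert_Choice.inv h \<circ> g = id" using stab_id[OF that(3)] by blast
    hence "h \<circ> (Hilbert_Choice.inv h \<circ> g) = h" by simp
    thus ?thesis using permutes_inv_o(1)[OF permutes[OF that(2)]] by (simp add: o_assoc)
  qed
  have "X \<noteq> {}" using assms(2) by auto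
  then obtain v where v: "v \<in> X" by blast
  have tv: "t v \<noteq> v" using regular[OF assms(3) id_mem v] assms(4) by auto
  have tt: "t (t v) = v" using assms(5) by (metis comp_apply id_apply)
  define B where "B = {v, t v}"
  have "g ` B = B" if g: "g \<in> H" and meet: "g ` B \<inter> B \<noteq> {}" for g
  proof -
    have gt: "g \<circ> t \<in> H" by (rule comp_mem[OF g assms(3)])
    have "g v = v \<or> g v = t v \<or> (g \<circ> t) v = v \<or> (g \<circ> t) v = t v"
      using meet by (auto simp: B_def)
    hence "g = id \<or> g = t \<or> g \<circ> t = id \<or> g \<circ> t = t"
      using regular[OF g id_mem v] regular[OF g assms(3) v] regular[OF gt id_mem v]
        regular[OF gt assms(3) v] by (metis id_apply)
    moreover have "g \<circ> t \<circ> t = g" using assms(5) by (simp add: o_assoc[symmetric])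
    ultimately have "g = id \<or> g = t" using assms(5) by (metis id_comp)
    thus ?thesis using tt by (auto simp: B_def)
  qed
  moreover have "B \<subseteq> X" using v image_mem[OF assms(3) v] by (simp add: B_def)
  moreover have "card B = 2" using tv by (simp add: B_def)
  ultimately show ?thesis using assms(2) unfolding imprimitive_def is_block_def
    by (intro exI[of _ B]) auto
qed

end


section \<open>Elements of prime order and involutions\<close>

definition powers :: "('a \<Rightarrow> 'a) \<Rightarrow> nat \<Rightarrow> ('a \<Rightarrow> 'a) set" where
  "powers g n = (\<lambda>k. g ^^ k) ` {..<n}"

lemma funpow_fixed: "g x = x \<Longrightarrow> (g ^^ n) x = x"
  by (induction n) auto

lemma funpow_mod:
  assumes "g ^^ n = id"
  shows "g ^^ m = g ^^ (m mod n)"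
proof -
  have "g ^^ m = g ^^ (n * (m div n) + m mod n)" by simp
  also have "\<dots> = (g ^^ n) ^^ (m div n) \<circ> g ^^ (m mod n)"
    by (simp only: funpow_add funpow_mult)
  finally show ?thesis using assms by (simp add: id_funpow)
qed

lemma funpow_eq_id_imp_id_prime:
  assumes "prime p" "g ^^ p = id" "0 < d" "d < p" "g ^^ d = id"
  shows "g = id"
proof -
  obtain x y where xy: "d * x = Suc (p * y)"
    using bezout_prime[OF assms(1)] assms(3,4) by (meson dvd_imp_le not_le)
  have "g = g ^^ Suc (p * y)" using assms(2) by (simp add: funpow_mult[symmetric] id_funpow)
  also have "\<dots> = id" using assms(5) by (simp add: xy[symmetric] funpow_mult[symmetric] id_funpow)
  finally show ?thesis .
qed

lemma perm_group_powers:
  assumes "g permutes X" "g ^^ n = id" "0 < n"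
  shows "perm_group X (powers g n)"
proof
  fix h assume "h \<in> powers g n"
  then obtain i where i: "i < n" "h = g ^^ i" by (auto simp: powers_def)
  show "h permutes X" using i(2) permutes_funpow[OF assms(1)] by simp
  have "g ^^ (n - i) \<circ> h = id"
    using assms(2) i by (simp add: funpow_add[symmetric])
  hence "Hilbert_Choice.inv h = g ^^ (n - i)"
    using permutes_inv_o(1)[OF \<open>h permutes X\<close>] by (metis comp_id o_assoc id_comp)
  also have "\<dots> = g ^^ ((n - i) mod n)" by (rule funpow_mod[OF assms(2)])
  finally show "Hilbert_Choice.inv h \<in> powers g n" using assms(3) by (simp add: powers_def)
next
  show "id \<in> powers g n" using assms(3) by (force simp: powers_def)
next
  fix h h' assume "h \<in> powers g n" "h' \<in> powers g n"
  then obtain i j where "h = g ^^ i" "h' = g ^^ j" by (auto simp: powers_def)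
  hence "h \<circ> h' = g ^^ ((i + j) mod n)"
    using funpow_mod[OF assms(2)] by (simp add: funpow_add[symmetric])
  thus "h \<circ> h' \<in> powers g n" using assms(3) by (simp add: powers_def)
qed

lemma card_powers_prime:
  assumes "prime p" "g ^^ p = id" "g \<noteq> id"
  shows "card (powers g p) = p"
proof -
  have "g ^^ i \<noteq> g ^^ j" if "i < j" "j < p" for i j
  proof
    assume eq: "g ^^ i = g ^^ j"
    have "g ^^ (j - i) = g ^^ (j - i) \<circ> g ^^ p" using assms(2) by simp
    also have "\<dots> = g ^^ j \<circ> g ^^ (p - i)" using that by (simp add: funpow_add[symmetric])
    also have "\<dots> = g ^^ i \<circ> g ^^ (p - i)" using eq by simp
    also have "\<dots> = id" using assms(2) that by (simp add: funpow_add[symmetric])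
    finally have "g ^^ (j - i) = id" .
    moreover have "0 < j - i" "j - i < p" using that by simp_all
    ultimately show False using funpow_eq_id_imp_id_prime[OF assms(1,2)] assms(3) by blast
  qed
  hence "inj_on (\<lambda>k. g ^^ k) {..<p}" by (metis inj_onI lessThan_iff linorder_neqE_nat)
  thus ?thesis by (simp add: powers_def card_image)
qed

lemma common_fix_points_powers:
  assumes "1 < n"
  shows "common_fix_points X (powers g n) = fix_points X g"
proof
  have "g \<in> powers g n" using assms by (force simp: powers_def)
  thus "common_fix_points X (powers g n) \<subseteq> fix_points X g"
    by (auto simp: common_fix_points_def fix_points_def)
  show "fix_points X g \<subseteq> common_fix_points X (powers g n)"
    by (auto simp: common_fix_points_def fix_points_def powers_def funpow_fixed)
qed

lemma moved_eq_diff_fix_points: "g permutes X \<Longrightarrow> {x. g x \<noteq> x} = X - fix_points X g"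
  by (auto simp: fix_points_def dest: permutes_not_in)

lemma prime_dvd_card_moved:
  assumes "finite X" "g permutes X" "prime p" "g ^^ p = id" "g \<noteq> id"
  shows "p dvd card (X - fix_points X g)"
proof -
  have "perm_group X (powers g p)"
    using perm_group_powers[OF assms(2,4)] prime_gt_0_nat[OF assms(3)] .
  moreover have "card (powers g p) = p ^ 1" using card_powers_prime[OF assms(3-5)] by simp
  moreover have "finite (powers g p)" by (simp add: powers_def)
  ultimately have "p dvd card (X - common_fix_points X (powers g p))"
    using perm_group.prime_dvd_card_non_fixed assms(1,3) by blast
  moreover have "common_fix_points X (powers g p) = fix_points X g"
    by (rule common_fix_points_powers) (rule prime_gt_1_nat[OF assms(3)])
  ultimately show ?thesis by simp
qed

text \<open>Induction on the number of moved points, splitting off one 2-cycle at a time.\<close>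
lemma involution_card_moved:
  assumes "finite X" "t permutes X" "t \<circ> t = id"
  shows "even (card (X - fix_points X t)) \<and> (evenperm t \<longleftrightarrow> 4 dvd card (X - fix_points X t))"
proof -
  have "even n \<and> (evenperm t \<longleftrightarrow> 4 dvd n)" if "card {x. t x \<noteq> x} = n" "t permutes X" "t \<circ> t = id"
    for n t
    using that
  proof (induction n arbitrary: t rule: less_induct)
    case (less n)
    have fin: "finite {x. t x \<noteq> x}"
      using assms(1) by (simp add: moved_eq_diff_fix_points[OF less.prems(2)])
    show ?case
    proof (cases "n = 0")
      case True
      hence "t = id" using less.prems(1) fin by (auto simp: fun_eq_iff)
      thus ?thesis using True by simp
    next
      case False
      then obtain x where x: "t x \<noteq> x" using less.prems(1) by fastforce
      define y where "y = t x"
      have ty: "t y = x" using less.prems(3) unfolding y_def by (metis comp_apply id_apply)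
      have xy: "x \<noteq> y" using x y_def by simp
      have xyX: "x \<in> X" "y \<in> X" using less.prems(2) x ty xy by (metis permutes_not_in)+
      define t' where "t' = transpose x y \<circ> t"
      have t'z: "t' z = (if z = x \<or> z = y then z else t z)" for z
      proof -
        have "t z \<noteq> x" if "z \<noteq> y" using that ty less.prems(3) by (metis comp_apply id_apply)
        moreover have "t z \<noteq> y" if "z \<noteq> x" using that y_def less.prems(3) by (metis comp_apply id_apply)
        ultimately show ?thesis unfolding t'_def using ty y_def by (auto simp: transpose_def)
      qed
      have "{z. t' z \<noteq> z} = {z. t z \<noteq> z} - {x, y}" using t'z by auto
      hence card': "card {z. t' z \<noteq> z} = n - 2"
        using less.prems(1) fin x ty xy by (simp add: card_Diff_subset)
      have n2: "2 \<le> n"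
        using less.prems(1) card_mono[OF fin, of "{x, y}"] x ty xy by simp
      have t'X: "t' permutes X"
        unfolding t'_def using xyX less.prems(2) by (simp add: permutes_compose permutes_swap_id)
      have t't': "t' \<circ> t' = id"
      proof
        fix z show "(t' \<circ> t') z = id z"
          using t'z[of z] t'z[of "t z"] less.prems(3) ty y_def
          by (auto simp: fun_eq_iff) (metis comp_apply id_apply)+
      qed
      have IH: "even (n - 2) \<and> (evenperm t' \<longleftrightarrow> 4 dvd (n - 2))"
        using less.IH[of "n - 2" t'] n2 t'X t't' card' by simp
      have "t = transpose x y \<circ> t'" unfolding t'_def by (simp add: fun_eq_iff)
      hence "evenperm t \<longleftrightarrow> \<not> evenperm t'"
        using evenperm_comp[OF permutation_swap_id permutes_imp_permutation[OF assms(1) t'X]] xy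
        by (simp add: evenperm_swap)
      moreover obtain k where k: "n - 2 = 2 * k" using IH by (metis evenE)
      moreover have "n = 2 * k + 2" using k n2 by simp
      moreover have "4 dvd 2 * k + 2 \<longleftrightarrow> \<not> 4 dvd 2 * k" by presburger
      ultimately show ?thesis using IH by simp
    qed
  qed
  thus ?thesis using assms(2,3) moved_eq_diff_fix_points[OF assms(2)] by metis
qed


section \<open>Graph automorphisms\<close>

lemma perm_group_graph_auts: "perm_group V (graph_auts V E)"
proof
  fix h assume h: "h \<in> graph_auts V E"
  hence hV: "h permutes V" by (simp add: graph_auts_def)
  have "E (Hilbert_Choice.inv h u) (Hilbert_Choice.inv h w) \<longleftrightarrow> E u w" if "u \<in> V" "w \<in> V" for u w
  proof -
    have "Hilbert_Choice.inv h u \<in> V" "Hilbert_Choice.inv h w \<in> V"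
      using that permutes_in_image[OF permutes_inv[OF hV]] by auto
    hence "E (h (Hilbert_Choice.inv h u)) (h (Hilbert_Choice.inv h w))
        \<longleftrightarrow> E (Hilbert_Choice.inv h u) (Hilbert_Choice.inv h w)"
      using h by (simp add: graph_auts_def)
    thus ?thesis by (simp add: permutes_inverses(1)[OF hV])
  qed
  thus "Hilbert_Choice.inv h \<in> graph_auts V E"
    by (simp add: graph_auts_def permutes_inv[OF hV])
next
  fix g h assume "g \<in> graph_auts V E" "h \<in> graph_auts V E"
  thus "g \<circ> h \<in> graph_auts V E"
    by (auto simp: graph_auts_def permutes_compose permutes_in_image)
qed (auto simp: graph_auts_def permutes_id)

lemma Aut_eq_perm_monoid: "Aut V E = perm_monoid (graph_auts V E)"
  by (simp add: Aut_def perm_monoid_def)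

lemma transitive_perm_group_graph_auts:
  assumes "finite V" "vertex_transitive V E"
  shows "transitive_perm_group V (graph_auts V E)"
proof (intro transitive_perm_group.intro transitive_perm_group_axioms.intro
    perm_group_graph_auts assms(1))
  interpret perm_group V "graph_auts V E" by (rule perm_group_graph_auts)
  fix x assume x: "x \<in> V"
  show "orb (graph_auts V E) x = V"
    using assms(2) x orb_subset[OF x] by (auto simp: vertex_transitive_def mem_orb_iff)
qed

lemma graph_auts_aut_iff:
  "g \<in> graph_auts V E \<Longrightarrow> u \<in> V \<Longrightarrow> w \<in> V \<Longrightarrow> E (g u) (g w) \<longleftrightarrow> E u w"
  by (simp add: graph_auts_def)

lemma graph_auts_eq_permutations_if_complete_or_empty:
  assumes "\<And>u w. u \<in> V \<Longrightarrow> w \<in> V \<Longrightarrow> E u w \<longleftrightarrow> c \<and> u \<noteq> w"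
  shows "graph_auts V E = {p. p permutes V}"
proof -
  have "E (p u) (p w) \<longleftrightarrow> E u w" if "p permutes V" "u \<in> V" "w \<in> V" for p u w
    using that assms permutes_in_image[OF that(1)] permutes_inj[OF that(1)] by (simp add: inj_eq)
  thus ?thesis by (auto simp: graph_auts_def)
qed

text \<open>In a vertex-transitive graph on at least four vertices whose vertex is adjacent to all or
  to none of the others, every permutation is an automorphism, so the automorphism group is
  too large to be isomorphic to a proper subgroup of the symmetric group.\<close>
lemma graph_auts_eq_permutations_if_uniform_nbhd:
  assumes "vertex_transitive V E" "v \<in> V" "\<And>w. w \<in> V \<Longrightarrow> E v w \<longleftrightarrow> c \<and> w \<noteq> v"
  shows "graph_auts V E = {p. p permutes V}"
proof (rule graph_auts_eq_permutations_if_complete_or_empty)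
  fix u w assume u: "u \<in> V" and w: "w \<in> V"
  obtain g where g: "g \<in> graph_auts V E" "g u = v"
    using assms(1,2) u by (auto simp: vertex_transitive_def)
  interpret perm_group V "graph_auts V E" by (rule perm_group_graph_auts)
  have "E u w \<longleftrightarrow> E (g u) (g w)" using graph_auts_aut_iff[OF g(1) u w] by simp
  also have "\<dots> \<longleftrightarrow> c \<and> g w \<noteq> g u" using assms(3)[OF image_mem[OF g(1) w]] g(2) by simp
  finally show "E u w \<longleftrightarrow> c \<and> u \<noteq> w" using apply_eq_iff[OF g(1)] by auto
qed

definition complement_graph :: "'a set \<Rightarrow> ('a \<Rightarrow> 'a \<Rightarrow> bool) \<Rightarrow> 'a \<Rightarrow> 'a \<Rightarrow> bool" where
  "complement_graph V E u w \<longleftrightarrow> u \<in> V \<and> w \<in> V \<and> u \<noteq> w \<and> \<not> E u w"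

lemma simple_graph_complement: "simple_graph V E \<Longrightarrow> simple_graph V (complement_graph V E)"
  by (auto simp: simple_graph_def complement_graph_def)

lemma graph_auts_complement:
  assumes "simple_graph V E"
  shows "graph_auts V (complement_graph V E) = graph_auts V E"
proof -
  have "(\<forall>u\<in>V. \<forall>w\<in>V. complement_graph V E (g u) (g w) \<longleftrightarrow> complement_graph V E u w)
    \<longleftrightarrow> (\<forall>u\<in>V. \<forall>w\<in>V. E (g u) (g w) \<longleftrightarrow> E u w)" if g: "g permutes V" for g
  proof -
    have gV: "\<And>u. u \<in> V \<Longrightarrow> g u \<in> V" using g by (simp add: permutes_in_image)
    have gi: "\<And>u w. g u = g w \<longleftrightarrow> u = w" using permutes_inj[OF g] by (simp add: inj_eq)
    have irr: "\<And>u. \<not> E u u" using assms by (simp add: simple_graph_def)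
    have "(complement_graph V E (g u) (g w) \<longleftrightarrow> complement_graph V E u w)
        \<longleftrightarrow> (E (g u) (g w) \<longleftrightarrow> E u w)" if "u \<in> V" "w \<in> V" for u w
      using that gV gi irr unfolding complement_graph_def by (cases "u = w") auto
    thus ?thesis by blast
  qed
  thus ?thesis unfolding graph_auts_def by blast
qed


section \<open>Cubic graphs on ten vertices with a rank three automorphism group\<close>

definition nbhd :: "'a set \<Rightarrow> ('a \<Rightarrow> 'a \<Rightarrow> bool) \<Rightarrow> 'a \<Rightarrow> 'a set" where
  "nbhd V E u = {w \<in> V. E u w}"

lemma nbhd_image:
  assumes "g \<in> graph_auts V E" "u \<in> V"
  shows "g ` nbhd V E u = nbhd V E (g u)"
proof -
  interpret perm_group V "graph_auts V E" by (rule perm_group_graph_auts)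
  show ?thesis
  proof
    show "g ` nbhd V E u \<subseteq> nbhd V E (g u)"
      using graph_auts_aut_iff[OF assms] image_mem[OF assms(1)] by (auto simp: nbhd_def)
    show "nbhd V E (g u) \<subseteq> g ` nbhd V E u"
    proof
      fix y assume y: "y \<in> nbhd V E (g u)"
      let ?z = "Hilbert_Choice.inv g y"
      have z: "?z \<in> V" using image_mem[OF inv_mem[OF assms(1)]] y by (simp add: nbhd_def)
      have "E (g u) (g ?z)" using y apply_inv[OF assms(1)] by (simp add: nbhd_def)
      hence "?z \<in> nbhd V E u" using graph_auts_aut_iff[OF assms z] z by (simp add: nbhd_def)
      thus "y \<in> g ` nbhd V E u" using apply_inv[OF assms(1)] by (metis image_eqI)
    qed
  qed
qed

lemma three_disjoint_swaps:
  fixes a1 b1 a2 b2 a3 b3 :: 'a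
  assumes "distinct [a1, b1, a2, b2, a3, b3]"
  defines "\<tau> \<equiv> transpose a1 b1 \<circ> (transpose a2 b2 \<circ> transpose a3 b3)"
  shows "\<tau> a1 = b1" "\<tau> b1 = a1" "\<tau> a2 = b2" "\<tau> b2 = a2" "\<tau> a3 = b3" "\<tau> b3 = a3"
    and "u \<notin> {a1, b1, a2, b2, a3, b3} \<Longrightarrow> \<tau> u = u"
    and "\<not> evenperm \<tau>"
proof -
  have "a1 \<noteq> b1" "a1 \<noteq> a2" "a1 \<noteq> b2" "a1 \<noteq> a3" "a1 \<noteq> b3" "b1 \<noteq> a2" "b1 \<noteq> b2"
    "b1 \<noteq> a3" "b1 \<noteq> b3" "a2 \<noteq> b2" "a2 \<noteq> a3" "a2 \<noteq> b3" "b2 \<noteq> a3" "b2 \<noteq> b3" "a3 \<noteq> b3"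
    using assms(1) by auto
  thus "\<tau> a1 = b1" "\<tau> b1 = a1" "\<tau> a2 = b2" "\<tau> b2 = a2" "\<tau> a3 = b3" "\<tau> b3 = a3"
    and "u \<notin> {a1, b1, a2, b2, a3, b3} \<Longrightarrow> \<tau> u = u"
    and "\<not> evenperm \<tau>"
    unfolding \<tau>_def
    by (simp_all add: transpose_def evenperm_comp permutation_compose permutation_swap_id evenperm_swap)
qed

lemma double_counting:
  assumes "finite A" "finite B"
  shows "(\<Sum>a\<in>A. card {b\<in>B. R a b}) = (\<Sum>b\<in>B. card {a\<in>A. R a b})"
proof -
  have "(\<Sum>a\<in>A. card {b\<in>B. R a b}) = (\<Sum>a\<in>A. \<Sum>b\<in>B. if R a b then 1 else 0)"
    using assms(2) by (simp add: sum.If_cases Collect_conj_eq Int_commute)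
  also have "\<dots> = (\<Sum>b\<in>B. \<Sum>a\<in>A. if R a b then 1 else 0)" by (rule sum.swap)
  also have "\<dots> = (\<Sum>b\<in>B. card {a\<in>A. R a b})"
    using assms(1) by (simp add: sum.If_cases Collect_conj_eq Int_commute)
  finally show ?thesis .
qed

text \<open>The vertex stabiliser has the three orbits \<open>{v}\<close>, the neighbourhood \<open>N\<close> and the set
  \<open>M\<close> of the six vertices at distance two. Such a graph is the Petersen graph; all that is
  needed here is that it has an odd automorphism: on each of the three pairs of
  \<open>M\<close>-neighbours of a vertex of \<open>N\<close>, swap the two vertices.\<close>
locale cubic_rank3_graph =
  fixes V :: "'a set" and E :: "'a \<Rightarrow> 'a \<Rightarrow> bool" and v :: 'a
  assumes simple: "simple_graph V E" and vertex_transitive: "vertex_transitive V E"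
    and v: "v \<in> V" and card_V: "card V = 10" and card_N: "card (nbhd V E v) = 3"
    and stab_transitive_N: "\<And>x y. x \<in> nbhd V E v \<Longrightarrow> y \<in> nbhd V E v \<Longrightarrow>
      \<exists>h\<in>graph_auts V E. h v = v \<and> h x = y"
    and stab_transitive_M: "\<And>x y. x \<in> V - insert v (nbhd V E v) \<Longrightarrow>
      y \<in> V - insert v (nbhd V E v) \<Longrightarrow> \<exists>h\<in>graph_auts V E. h v = v \<and> h x = y"
begin

sublocale perm_group V "graph_auts V E" by (rule perm_group_graph_auts)

abbreviation "nb \<equiv> nbhd V E"
abbreviation "N \<equiv> nbhd V E v"
abbreviation "M \<equiv> V - insert v (nbhd V E v)"

lemma finite_V: "finite V"
  using card_V by (intro card_ge_0_finite) simp

lemma E_sym: "E a b \<Longrightarrow> E b a" and E_irrefl: "\<not> E a a" and E_in_V: "E a b \<Longrightarrow> a \<in> V \<and> b \<in> V"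
  using simple by (auto simp: simple_graph_def)

lemma nbhd_subset: "nb u \<subseteq> V"
  by (auto simp: nbhd_def)

lemma finite_nbhd: "finite (nb u)"
  using finite_subset[OF nbhd_subset finite_V] .

lemma mem_nbhd_iff: "w \<in> nb u \<longleftrightarrow> E u w"
  using E_in_V by (auto simp: nbhd_def)

lemma card_nbhd: "u \<in> V \<Longrightarrow> card (nb u) = 3"
proof -
  assume u: "u \<in> V"
  obtain g where g: "g \<in> graph_auts V E" "g u = v"
    using vertex_transitive u v by (auto simp: vertex_transitive_def)
  have "card (g ` nb u) = card (nb u)"
    using permutes_inj[OF permutes[OF g(1)]] by (simp add: card_image inj_on_def inj_def)
  thus ?thesis using nbhd_image[OF g(1) u] g(2) card_N by simp
qed

lemma stab_maps_N:
  assumes "h \<in> graph_auts V E" "h v = v" "x \<in> N"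
  shows "h x \<in> N"
proof -
  have "h x \<in> h ` N" using assms(3) by blast
  thus ?thesis using nbhd_image[OF assms(1) v] assms(2) by simp
qed

lemma card_M: "card M = 6"
proof -
  have sub: "insert v N \<subseteq> V" using v nbhd_subset by blast
  have "card (insert v N) = 4" using card_N finite_nbhd E_irrefl by (simp add: mem_nbhd_iff)
  thus ?thesis using card_Diff_subset[OF finite_subset[OF sub finite_V] sub] card_V by simp
qed

lemma edge_in_N_imp_clique:
  assumes x: "x \<in> N" and y: "y \<in> N" and xy: "E x y" and b: "b \<in> N"
  shows "N - {b} \<subseteq> nb b"
proof -
  have "x \<noteq> y" using xy E_irrefl by auto
  obtain z where z: "z \<in> N" "z \<noteq> x" "z \<noteq> y"
  proof -
    have "card {x, y} = 2" using \<open>x \<noteq> y\<close> by simp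
    hence "N \<noteq> {x, y}" using card_N by auto
    thus ?thesis using that x y by blast
  qed
  have N_eq: "N = {x, y, z}"
    using card_subset_eq[OF finite_nbhd, of "{x, y, z}"] x y z \<open>x \<noteq> y\<close> card_N by simp
  obtain h where h: "h \<in> graph_auts V E" "h v = v" "h x = z" using stab_transitive_N x z by blast
  have "h y \<in> N" "h y \<noteq> z" using stab_maps_N[OF h(1,2) y] apply_eq_iff[OF h(1)] h(3) \<open>x \<noteq> y\<close> by auto
  moreover have "E z (h y)" using graph_auts_aut_iff[OF h(1)] xy h(3) E_in_V by blast
  ultimately have "E z x \<or> E z y" using N_eq by auto
  hence "\<exists>a\<in>N. N - {a} \<subseteq> nb a"
  proof
    assume "E z x"
    thus ?thesis using N_eq xy E_sym x by (intro bexI[of _ x]) (auto simp: mem_nbhd_iff)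
  next
    assume "E z y"
    thus ?thesis using N_eq xy E_sym y by (intro bexI[of _ y]) (auto simp: mem_nbhd_iff)
  qed
  then obtain a where a: "a \<in> N" "N - {a} \<subseteq> nb a" by blast
  obtain k where k: "k \<in> graph_auts V E" "k v = v" "k a = b" using stab_transitive_N a(1) b by blast
  have "k ` N = N" using nbhd_image[OF k(1) v] k(2) by simp
  hence "N - {b} = k ` (N - {a})" using k(3) apply_eq_iff[OF k(1)] by auto
  also have "\<dots> \<subseteq> k ` nb a" using a(2) by blast
  also have "\<dots> = nb b" using nbhd_image[OF k(1)] a(1) k(3) nbhd_subset by blast
  finally show ?thesis .
qed

text \<open>A set of four vertices closed under adjacency would be a union of connected components,
  which in a vertex-transitive graph all have the same size; but \<open>4\<close> does not divide \<open>10\<close>.\<close>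
lemma no_closed_four_set:
  assumes K: "K \<subseteq> V" "card K = 4" "v \<in> K" and closed: "\<And>a b. a \<in> K \<Longrightarrow> E a b \<Longrightarrow> b \<in> K"
  shows False
proof -
  have "N \<subseteq> K" using closed[OF K(3)] by (auto simp: mem_nbhd_iff)
  hence K_eq: "K = insert v N"
    using card_subset_eq[of K "insert v N"] K card_N finite_nbhd E_irrefl finite_subset[OF K(1) finite_V]
    by (simp add: mem_nbhd_iff)
  have "M \<noteq> {}" using card_M by (metis card.empty zero_neq_numeral)
  then obtain m where m: "m \<in> M" by blast
  obtain g where g: "g \<in> graph_auts V E" "g v = m"
    using vertex_transitive v m by (auto simp: vertex_transitive_def)
  have closed': "b \<in> g ` K" if a: "a \<in> g ` K" and ab: "E a b" for a b
  proof -
    obtain a0 where a0: "a0 \<in> K" "a = g a0" using a by blast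
    have b0: "Hilbert_Choice.inv g b \<in> V" using image_mem[OF inv_mem[OF g(1)]] ab E_in_V by blast
    have "E (g a0) (g (Hilbert_Choice.inv g b))" using ab a0(2) apply_inv[OF g(1)] by simp
    hence "E a0 (Hilbert_Choice.inv g b)" using graph_auts_aut_iff[OF g(1)] a0(1) K(1) b0 by blast
    hence "Hilbert_Choice.inv g b \<in> K" using closed a0(1) by blast
    thus ?thesis using apply_inv[OF g(1)] by (metis image_eqI)
  qed
  have disj: "K \<inter> g ` K = {}"
  proof (rule ccontr)
    assume "K \<inter> g ` K \<noteq> {}"
    then obtain a where a: "a \<in> K" "a \<in> g ` K" by blast
    have "v \<in> g ` K"
    proof (cases "a = v")
      case False
      hence "a \<in> N" using a K_eq by simp
      thus ?thesis using closed'[OF a(2)] E_sym by (simp add: mem_nbhd_iff)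
    qed (use a in simp)
    then obtain a0 where "a0 \<in> insert v N" "v = g a0" using K_eq by blast
    moreover have "g a0 \<noteq> v" if a0: "a0 \<in> N"
    proof
      assume "g a0 = v"
      have "a0 \<in> V" using a0 nbhd_subset by blast
      hence "E (g v) (g a0)" using graph_auts_aut_iff[OF g(1) v] a0 by (simp add: mem_nbhd_iff)
      hence "E v m" using g(2) \<open>g a0 = v\<close> E_sym by simp
      thus False using m by (simp add: mem_nbhd_iff)
    qed
    ultimately show False using g(2) m by auto
  qed
  have gK: "g ` K \<subseteq> V" using image_mem[OF g(1)] K(1) by blast
  have "card (g ` K) = 4"
    using card_image[OF inj_on_subset[OF permutes_inj[OF permutes[OF g(1)]] subset_UNIV]] K(2)
    by simp
  hence "card (K \<union> g ` K) = 8"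
    using card_Un_disjoint[OF finite_subset[OF K(1) finite_V] finite_subset[OF gK finite_V] disj] K(2)
    by simp
  moreover have sub: "K \<union> g ` K \<subseteq> V" using K(1) gK by blast
  define R where "R = V - (K \<union> g ` K)"
  ultimately have card_R: "card R = 2"
    using card_Diff_subset[OF finite_subset[OF sub finite_V] sub] card_V by (simp add: R_def)
  hence "R \<noteq> {}" by (metis card.empty zero_neq_numeral)
  then obtain r where r: "r \<in> R" by blast
  have "nb r \<subseteq> R - {r}"
  proof
    fix b assume "b \<in> nb r"
    hence b: "b \<in> V" "E r b" "E b r" using E_sym by (auto simp: nbhd_def)
    have "b \<notin> K" "b \<notin> g ` K" using closed[OF _ b(3)] closed'[OF _ b(3)] r by (auto simp: R_def)
    moreover have "b \<noteq> r" using b(2) E_irrefl by auto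
    ultimately show "b \<in> R - {r}" using b(1) by (simp add: R_def)
  qed
  moreover have "finite (R - {r})" using finite_V by (simp add: R_def)
  ultimately have "card (nb r) \<le> card (R - {r})" by (simp add: card_mono)
  moreover have "card (R - {r}) = 1" using card_R r by simp
  moreover have "card (nb r) = 3" using card_nbhd r by (simp add: R_def)
  ultimately show False by simp
qed

lemma N_independent: "x \<in> N \<Longrightarrow> y \<in> N \<Longrightarrow> \<not> E x y"
proof
  assume xy: "x \<in> N" "y \<in> N" "E x y"
  have "v \<notin> N" using E_irrefl by (simp add: mem_nbhd_iff)
  hence card_K: "card (insert v N) = 4" using card_N finite_nbhd by simp
  have closed: "b \<in> insert v N" if a: "a \<in> insert v N" and ab: "E a b" for a b
  proof (cases "a = v")
    case False
    hence aN: "a \<in> N" using a by simp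
    have "v \<in> nb a" using aN E_sym by (simp add: mem_nbhd_iff)
    hence "insert v N - {a} \<subseteq> nb a" using edge_in_N_imp_clique[OF xy aN] by blast
    moreover have "card (insert v N - {a}) = card (nb a)"
      using card_K card_nbhd[of a] aN nbhd_subset by auto
    ultimately have "insert v N - {a} = nb a" using card_subset_eq[OF finite_nbhd] by blast
    moreover have "b \<in> nb a" using ab by (simp add: mem_nbhd_iff)
    ultimately show ?thesis by blast
  qed (use ab in \<open>simp add: mem_nbhd_iff\<close>)
  have "insert v N \<subseteq> V" using v nbhd_subset by blast
  thus False by (rule no_closed_four_set[OF _ card_K insertI1 closed])
qed

lemma triangle_free: "E a b \<Longrightarrow> E b c \<Longrightarrow> E a c \<Longrightarrow> False"
proof -
  assume abc: "E a b" "E b c" "E a c"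
  hence V: "a \<in> V" "b \<in> V" "c \<in> V" using E_in_V by auto
  obtain g where g: "g \<in> graph_auts V E" "g a = v" using vertex_transitive V v by (auto simp: vertex_transitive_def)
  have "g b \<in> N" "g c \<in> N" "E (g b) (g c)"
    using abc g graph_auts_aut_iff[OF g(1)] V by (auto simp: mem_nbhd_iff)
  thus False using N_independent by blast
qed

lemma nbhd_N_minus_v:
  assumes x: "x \<in> N"
  shows "nb x - {v} \<subseteq> M" "card (nb x - {v}) = 2"
proof -
  show "nb x - {v} \<subseteq> M" using N_independent[OF x] nbhd_subset by (auto simp: mem_nbhd_iff)
  have "v \<in> nb x" using x E_sym by (simp add: mem_nbhd_iff)
  moreover have "x \<in> V" using x nbhd_subset by blast
  ultimately show "card (nb x - {v}) = 2" using card_nbhd finite_nbhd by simp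
qed

lemma card_nbhd_inter_N:
  assumes m: "m \<in> M"
  shows "card (nb m \<inter> N) = 1"
proof -
  have const: "card (nb y \<inter> N) = card (nb m \<inter> N)" if y: "y \<in> M" for y
  proof -
    obtain h where h: "h \<in> graph_auts V E" "h v = v" "h y = m" using stab_transitive_M y m by blast
    have "h ` (nb y \<inter> N) = nb m \<inter> N"
      using nbhd_image[OF h(1)] y v h(2,3) permutes_inj[OF permutes[OF h(1)]] by (simp add: image_Int)
    thus ?thesis
      using permutes_inj[OF permutes[OF h(1)]] by (metis card_image inj_on_subset subset_UNIV)
  qed
  have "card {y\<in>M. E x y} = 2" if x: "x \<in> N" for x
  proof -
    have "{y\<in>M. E x y} = nb x - {v}" using nbhd_N_minus_v(1)[OF x] by (auto simp: mem_nbhd_iff)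
    thus ?thesis using nbhd_N_minus_v(2)[OF x] by simp
  qed
  hence "(\<Sum>x\<in>N. card {y\<in>M. E x y}) = 6" using card_N by simp
  moreover have "card {x\<in>N. E x y} = card (nb m \<inter> N)" if "y \<in> M" for y
  proof -
    have "{x\<in>N. E x y} = nb y \<inter> N" using E_sym by (auto simp: mem_nbhd_iff)
    thus ?thesis using const[OF that] by simp
  qed
  hence "(\<Sum>y\<in>M. card {x\<in>N. E x y}) = 6 * card (nb m \<inter> N)" using card_M by simp
  moreover have "finite M" using finite_V by simp
  ultimately show ?thesis using double_counting[OF finite_nbhd, of M] by simp
qed

lemma card_common_nbhd:
  assumes a: "a \<in> V" and b: "b \<in> V" and "a \<noteq> b" "\<not> E a b"
  shows "card (nb a \<inter> nb b) = 1"
proof -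
  obtain g where g: "g \<in> graph_auts V E" "g a = v"
    using vertex_transitive a v by (auto simp: vertex_transitive_def)
  have gb: "g b \<in> M"
    using assms g image_mem[OF g(1) b] graph_auts_aut_iff[OF g(1) a b] apply_eq_iff[OF g(1)]
    by (auto simp: mem_nbhd_iff)
  have "g ` (nb a \<inter> nb b) = nb (g b) \<inter> N"
    using nbhd_image[OF g(1)] a b g(2) permutes_inj[OF permutes[OF g(1)]] by (auto simp: image_Int)
  hence "card (nb a \<inter> nb b) = card (nb (g b) \<inter> N)"
    using permutes_inj[OF permutes[OF g(1)]] by (metis card_image inj_on_subset subset_UNIV)
  thus ?thesis using card_nbhd_inter_N[OF gb] by simp
qed

lemma unique_nbr_in_N:
  assumes "m \<in> M" "x \<in> N" "E x m" "y \<in> N" "E y m"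
  shows "x = y"
proof -
  obtain z where "nb m \<inter> N = {z}" using card_nbhd_inter_N[OF assms(1)] by (rule card_1_singletonE)
  moreover have "x \<in> nb m \<inter> N" "y \<in> nb m \<inter> N" using assms E_sym by (auto simp: mem_nbhd_iff)
  ultimately show ?thesis by (metis Int_iff singletonD)
qed

lemma partners_adjacent:
  assumes x: "x \<in> N" "nb x = {v, p, q}" "p \<noteq> q" "p \<in> M" "q \<in> M"
    and x': "x' \<in> N" "nb x' = {v, p', q'}" "p' \<in> M" "q' \<in> M"
    and pp': "E p p'"
  shows "E q q'"
proof (rule ccontr)
  assume nq: "\<not> E q q'"
  have Exp: "E x p" "E x q" "E x' p'" "E x' q'" using x(2) x'(2) by (auto simp: mem_nbhd_iff)
  have "x \<noteq> x'" using triangle_free[OF Exp(1) pp'] Exp(3) by blast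
  have "\<not> E q x'" using unique_nbr_in_N[OF x(5) x'(1) _ x(1) Exp(2)] E_sym \<open>x \<noteq> x'\<close> by blast
  moreover have "q \<noteq> x'" using x(5) x'(1) by blast
  ultimately have "card (nb q \<inter> nb x') = 1"
    using card_common_nbhd x(5) x'(1) nbhd_subset by blast
  then obtain c where c: "nb q \<inter> nb x' = {c}" by (rule card_1_singletonE)
  have "E q c" using c by (auto simp: mem_nbhd_iff)
  hence "c \<noteq> v" using x(5) E_sym by (auto simp: mem_nbhd_iff)
  moreover have "c \<noteq> q'" using \<open>E q c\<close> nq by auto
  ultimately have "c = p'" using c x'(2) by blast
  hence "E q p'" using c by (auto simp: mem_nbhd_iff)
  have "{x, p'} \<subseteq> nb p \<inter> nb q" using Exp E_sym pp' \<open>E q p'\<close> by (auto simp: mem_nbhd_iff)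
  moreover have "x \<noteq> p'" using x(1) x'(3) by blast
  ultimately have "2 \<le> card (nb p \<inter> nb q)"
    using card_mono[of "nb p \<inter> nb q" "{x, p'}"] finite_nbhd by auto
  moreover have "\<not> E p q" using triangle_free[OF Exp(1) _ Exp(2)] by blast
  ultimately show False using card_common_nbhd x(3-5) by auto
qed

lemma partner_swap_in_graph_auts:
  assumes perm: "\<tau> permutes V" and invol: "\<And>u. \<tau> (\<tau> u) = u" and fixed: "\<And>u. u \<notin> M \<Longrightarrow> \<tau> u = u"
    and partner: "\<And>m. m \<in> M \<Longrightarrow> \<exists>x\<in>N. nb x = {v, m, \<tau> m} \<and> m \<noteq> \<tau> m"
  shows "\<tau> \<in> graph_auts V E"
proof -
  have \<tau>M: "\<tau> m \<in> M" if m: "m \<in> M" for m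
  proof -
    obtain x where x: "x \<in> N" "nb x = {v, m, \<tau> m}" using partner[OF m] by blast
    have "\<tau> m \<noteq> v" using invol[of m] fixed[of v] m by force
    thus ?thesis using nbhd_N_minus_v(1)[OF x(1)] x(2) by blast
  qed
  have edge_M_N: "E (\<tau> u) (\<tau> w)" if uw: "E u w" and u: "u \<in> M" and w: "w \<notin> M" for u w
  proof -
    obtain x where x: "x \<in> N" "nb x = {v, u, \<tau> u}" using partner[OF u] by blast
    have "w \<in> N" using uw u w E_in_V E_sym by (auto simp: mem_nbhd_iff)
    moreover have "E x u" using x(2) by (auto simp: mem_nbhd_iff)
    ultimately have "w = x" using unique_nbr_in_N[OF u] uw E_sym x(1) by blast
    moreover have "E x (\<tau> u)" using x(2) by (auto simp: mem_nbhd_iff)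
    ultimately show ?thesis using fixed[OF w] E_sym by simp
  qed
  have edge: "E (\<tau> u) (\<tau> w)" if uw: "E u w" for u w
  proof (cases "u \<in> M"; cases "w \<in> M")
    assume u: "u \<in> M" and w: "w \<in> M"
    obtain x where x: "x \<in> N" "nb x = {v, u, \<tau> u}" "u \<noteq> \<tau> u" using partner[OF u] by blast
    obtain x' where x': "x' \<in> N" "nb x' = {v, w, \<tau> w}" using partner[OF w] by blast
    show ?thesis by (rule partners_adjacent[OF x(1,2,3) u \<tau>M[OF u] x' w \<tau>M[OF w] uw])
  next
    assume "u \<in> M" "w \<notin> M"
    thus ?thesis using edge_M_N uw by blast
  next
    assume "u \<notin> M" "w \<in> M"
    thus ?thesis using edge_M_N E_sym uw by blast
  next
    assume "u \<notin> M" "w \<notin> M"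
    thus ?thesis using fixed uw by simp
  qed
  have "E (\<tau> u) (\<tau> w) \<longleftrightarrow> E u w" for u w
    using edge[of u w] edge[of "\<tau> u" "\<tau> w"] invol by auto
  thus ?thesis using perm by (simp add: graph_auts_def)
qed

lemma odd_automorphism: "\<exists>\<tau>\<in>graph_auts V E. \<not> evenperm \<tau>"
proof -
  obtain x1 x2 x3 where N_eq: "N = {x1, x2, x3}" and x: "x1 \<noteq> x2" "x2 \<noteq> x3" "x1 \<noteq> x3"
    using card_N by (auto simp: card_3_iff)
  have xN: "x1 \<in> N" "x2 \<in> N" "x3 \<in> N" using N_eq by auto
  have "\<exists>a b. nb x - {v} = {a, b} \<and> a \<noteq> b" if "x \<in> N" for x
    using nbhd_N_minus_v(2)[OF that] by (simp add: card_2_iff)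
  then obtain a1 b1 a2 b2 a3 b3 where
    ab: "nb x1 - {v} = {a1, b1}" "nb x2 - {v} = {a2, b2}" "nb x3 - {v} = {a3, b3}"
    and ab_ne: "a1 \<noteq> b1" "a2 \<noteq> b2" "a3 \<noteq> b3"
    using xN by metis
  have abM: "a1 \<in> M" "b1 \<in> M" "a2 \<in> M" "b2 \<in> M" "a3 \<in> M" "b3 \<in> M"
    using nbhd_N_minus_v(1)[OF xN(1)] nbhd_N_minus_v(1)[OF xN(2)] nbhd_N_minus_v(1)[OF xN(3)] ab
    by auto
  have vnb: "v \<in> nb x" if "x \<in> N" for x using that E_sym by (simp add: mem_nbhd_iff)
  have nb_eq: "nb x1 = {v, a1, b1}" "nb x2 = {v, a2, b2}" "nb x3 = {v, a3, b3}"
    using ab vnb xN by blast+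
  have different: "p \<noteq> q"
    if p: "p \<in> nb x - {v}" and q: "q \<in> nb y - {v}" and xy: "x \<in> N" "y \<in> N" "x \<noteq> y" for p q x y
  proof
    assume "p = q"
    have "q \<in> M" using nbhd_N_minus_v(1)[OF xy(2)] q by blast
    moreover have "E x q" "E y q" using p q \<open>p = q\<close> by (auto simp: mem_nbhd_iff)
    ultimately show False using unique_nbr_in_N xy by blast
  qed
  have in_ab: "a1 \<in> nb x1 - {v}" "b1 \<in> nb x1 - {v}" "a2 \<in> nb x2 - {v}" "b2 \<in> nb x2 - {v}"
    "a3 \<in> nb x3 - {v}" "b3 \<in> nb x3 - {v}"
    using ab by auto
  have ds: "distinct [a1, b1, a2, b2, a3, b3]"
    using different[OF in_ab(1) in_ab(3) xN(1,2) x(1)] different[OF in_ab(1) in_ab(4) xN(1,2) x(1)]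
      different[OF in_ab(1) in_ab(5) xN(1,3) x(3)] different[OF in_ab(1) in_ab(6) xN(1,3) x(3)]
      different[OF in_ab(2) in_ab(3) xN(1,2) x(1)] different[OF in_ab(2) in_ab(4) xN(1,2) x(1)]
      different[OF in_ab(2) in_ab(5) xN(1,3) x(3)] different[OF in_ab(2) in_ab(6) xN(1,3) x(3)]
      different[OF in_ab(3) in_ab(5) xN(2,3) x(2)] different[OF in_ab(3) in_ab(6) xN(2,3) x(2)]
      different[OF in_ab(4) in_ab(5) xN(2,3) x(2)] different[OF in_ab(4) in_ab(6) xN(2,3) x(2)]
      ab_ne by simp
  define \<tau> where "\<tau> = transpose a1 b1 \<circ> (transpose a2 b2 \<circ> transpose a3 b3)"
  note \<tau> = three_disjoint_swaps[OF ds, folded \<tau>_def]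
  have "finite M" using finite_V by simp
  moreover have "{a1, b1, a2, b2, a3, b3} \<subseteq> M" using abM by simp
  moreover have "card {a1, b1, a2, b2, a3, b3} = 6" using distinct_card[OF ds] by simp
  ultimately have M_eq: "M = {a1, b1, a2, b2, a3, b3}"
    using card_subset_eq card_M by metis
  have "\<tau> \<in> graph_auts V E"
  proof (rule partner_swap_in_graph_auts)
    show "\<tau> permutes V"
      unfolding \<tau>_def using abM by (intro permutes_compose permutes_swap_id) auto
    show "\<tau> (\<tau> u) = u" for u
    proof (cases "u \<in> {a1, b1, a2, b2, a3, b3}")
      case True
      hence "u = a1 \<or> u = b1 \<or> u = a2 \<or> u = b2 \<or> u = a3 \<or> u = b3" by simp
      thus ?thesis using \<tau>(1-6) by (elim disjE) simp_all
    qed (simp add: \<tau>(7))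
    show "\<tau> u = u" if "u \<notin> M" for u using that \<tau>(7) M_eq by simp
    have partner: "\<exists>x\<in>N. nb x = {v, m, \<tau> m} \<and> m \<noteq> \<tau> m"
      if "x \<in> N" "nb x = {v, a, b}" "a \<noteq> b" "\<tau> a = b" "\<tau> b = a" "m = a \<or> m = b" for x a b m
    proof (cases "m = a")
      case True
      thus ?thesis using that(1-4) by (intro bexI[of _ x]) simp_all
    next
      case False
      hence "m = b" using that(6) by blast
      moreover have "nb x = {v, b, a}" using that(2) by blast
      ultimately show ?thesis using that(1,3,5) by (intro bexI[of _ x]) simp_all
    qed
    fix m assume "m \<in> M"
    then consider "m = a1 \<or> m = b1" | "m = a2 \<or> m = b2" | "m = a3 \<or> m = b3"
      using M_eq by blast
    thus "\<exists>x\<in>N. nb x = {v, m, \<tau> m} \<and> m \<noteq> \<tau> m"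
    proof cases
      case 1 thus ?thesis by (rule partner[OF xN(1) nb_eq(1) ab_ne(1) \<tau>(1,2)])
    next
      case 2 thus ?thesis by (rule partner[OF xN(2) nb_eq(2) ab_ne(2) \<tau>(3,4)])
    next
      case 3 thus ?thesis by (rule partner[OF xN(3) nb_eq(3) ab_ne(3) \<tau>(5,6)])
    qed
  qed
  thus ?thesis using \<tau>(8) by blast
qed

end


section \<open>The alternating group on five letters\<close>

text \<open>For prime \<open>n\<close>, these are exactly the elements of order \<open>n\<close>.\<close>
definition elems_of_order :: "('a \<Rightarrow> 'a) set \<Rightarrow> nat \<Rightarrow> ('a \<Rightarrow> 'a) set" where
  "elems_of_order H n = {g \<in> H. g \<noteq> id \<and> g ^^ n = id}"

definition centralizer :: "('a \<Rightarrow> 'a) set \<Rightarrow> ('a \<Rightarrow> 'a) \<Rightarrow> ('a \<Rightarrow> 'a) set" where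
  "centralizer H t = {g \<in> H. g \<circ> t = t \<circ> g}"

text \<open>An even permutation \<open>p\<close> of \<open>{1..5}\<close> is encoded by the list \<open>[p 1, \<dots>, p 5]\<close>; the group
  theoretic facts about \<open>A\<^sub>5\<close> needed below are then decided by evaluation over the
  60 codes.\<close>

definition A5_list :: "(nat \<Rightarrow> nat) list" where
  "A5_list = [
  (id),
  (transpose 1 2 \<circ> transpose 2 3),
  (transpose 1 3 \<circ> transpose 3 2),
  (transpose 1 2 \<circ> transpose 2 4),
  (transpose 1 4 \<circ> transpose 4 2),
  (transpose 1 2 \<circ> transpose 2 5),
  (transpose 1 5 \<circ> transpose 5 2),
  (transpose 1 3 \<circ> transpose 3 4),
  (transpose 1 4 \<circ> transpose 4 3),
  (transpose 1 3 \<circ> transpose 3 5),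
  (transpose 1 5 \<circ> transpose 5 3),
  (transpose 1 4 \<circ> transpose 4 5),
  (transpose 1 5 \<circ> transpose 5 4),
  (transpose 2 3 \<circ> transpose 3 4),
  (transpose 2 4 \<circ> transpose 4 3),
  (transpose 2 3 \<circ> transpose 3 5),
  (transpose 2 5 \<circ> transpose 5 3),
  (transpose 2 4 \<circ> transpose 4 5),
  (transpose 2 5 \<circ> transpose 5 4),
  (transpose 3 4 \<circ> transpose 4 5),
  (transpose 3 5 \<circ> transpose 5 4),
  (transpose 1 2 \<circ> transpose 3 4),
  (transpose 1 3 \<circ> transpose 2 4),
  (transpose 1 4 \<circ> transpose 2 3),
  (transpose 1 2 \<circ> transpose 3 5),
  (transpose 1 3 \<circ> transpose 2 5),
  (transpose 1 5 \<circ> transpose 2 3),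
  (transpose 1 2 \<circ> transpose 4 5),
  (transpose 1 4 \<circ> transpose 2 5),
  (transpose 1 5 \<circ> transpose 2 4),
  (transpose 1 3 \<circ> transpose 4 5),
  (transpose 1 4 \<circ> transpose 3 5),
  (transpose 1 5 \<circ> transpose 3 4),
  (transpose 2 3 \<circ> transpose 4 5),
  (transpose 2 4 \<circ> transpose 3 5),
  (transpose 2 5 \<circ> transpose 3 4),
  (transpose 1 2 \<circ> transpose 2 3 \<circ> transpose 3 4 \<circ> transpose 4 5),
  (transpose 1 2 \<circ> transpose 2 3 \<circ> transpose 3 5 \<circ> transpose 5 4),
  (transpose 1 2 \<circ> transpose 2 4 \<circ> transpose 4 3 \<circ> transpose 3 5),
  (transpose 1 2 \<circ> transpose 2 4 \<circ> transpose 4 5 \<circ> transpose 5 3),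
  (transpose 1 2 \<circ> transpose 2 5 \<circ> transpose 5 3 \<circ> transpose 3 4),
  (transpose 1 2 \<circ> transpose 2 5 \<circ> transpose 5 4 \<circ> transpose 4 3),
  (transpose 1 3 \<circ> transpose 3 2 \<circ> transpose 2 4 \<circ> transpose 4 5),
  (transpose 1 3 \<circ> transpose 3 2 \<circ> transpose 2 5 \<circ> transpose 5 4),
  (transpose 1 3 \<circ> transpose 3 4 \<circ> transpose 4 2 \<circ> transpose 2 5),
  (transpose 1 3 \<circ> transpose 3 4 \<circ> transpose 4 5 \<circ> transpose 5 2),
  (transpose 1 3 \<circ> transpose 3 5 \<circ> transpose 5 2 \<circ> transpose 2 4),
  (transpose 1 3 \<circ> transpose 3 5 \<circ> transpose 5 4 \<circ> transpose 4 2),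
  (transpose 1 4 \<circ> transpose 4 2 \<circ> transpose 2 3 \<circ> transpose 3 5),
  (transpose 1 4 \<circ> transpose 4 2 \<circ> transpose 2 5 \<circ> transpose 5 3),
  (transpose 1 4 \<circ> transpose 4 3 \<circ> transpose 3 2 \<circ> transpose 2 5),
  (transpose 1 4 \<circ> transpose 4 3 \<circ> transpose 3 5 \<circ> transpose 5 2),
  (transpose 1 4 \<circ> transpose 4 5 \<circ> transpose 5 2 \<circ> transpose 2 3),
  (transpose 1 4 \<circ> transpose 4 5 \<circ> transpose 5 3 \<circ> transpose 3 2),
  (transpose 1 5 \<circ> transpose 5 2 \<circ> transpose 2 3 \<circ> transpose 3 4),
  (transpose 1 5 \<circ> transpose 5 2 \<circ> transpose 2 4 \<circ> transpose 4 3),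
  (transpose 1 5 \<circ> transpose 5 3 \<circ> transpose 3 2 \<circ> transpose 2 4),
  (transpose 1 5 \<circ> transpose 5 3 \<circ> transpose 3 4 \<circ> transpose 4 2),
  (transpose 1 5 \<circ> transpose 5 4 \<circ> transpose 4 2 \<circ> transpose 2 3),
  (transpose 1 5 \<circ> transpose 5 4 \<circ> transpose 4 3 \<circ> transpose 3 2)]"

definition perm_code :: "(nat \<Rightarrow> nat) \<Rightarrow> nat list" where
  "perm_code p = map p [1, 2, 3, 4, 5]"

definition code_comp :: "nat list \<Rightarrow> nat list \<Rightarrow> nat list" where
  "code_comp l1 l2 = map (\<lambda>i. l1 ! (i - 1)) l2"

definition code_id :: "nat list" where
  "code_id = perm_code id"

definition code_pow :: "nat list \<Rightarrow> nat \<Rightarrow> nat list" where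
  "code_pow l n = (code_comp l ^^ n) code_id"

definition A5_codes :: "nat list list" where
  "A5_codes = map perm_code A5_list"

lemma A5_codes_eq: "A5_codes = [[1,2,3,4,5],[2,3,1,4,5],[3,1,2,4,5],[2,4,3,1,5],[4,1,3,2,5],[2,5,3,4,1],[5,1,3,4,2],[3,2,4,1,5],[4,2,1,3,5],[3,2,5,4,1],[5,2,1,4,3],[4,2,3,5,1],[5,2,3,1,4],[1,3,4,2,5],[1,4,2,3,5],[1,3,5,4,2],[1,5,2,4,3],[1,4,3,5,2],[1,5,3,2,4],[1,2,4,5,3],[1,2,5,3,4],[2,1,4,3,5],[3,4,1,2,5],[4,3,2,1,5],[2,1,5,4,3],[3,5,1,4,2],[5,3,2,4,1],[2,1,3,5,4],[4,5,3,1,2],[5,4,3,2,1],[3,2,1,5,4],[4,2,5,1,3],[5,2,4,3,1],[1,3,2,5,4],[1,4,5,2,3],[1,5,4,3,2],[2,3,4,5,1],[2,3,5,1,4],[2,4,5,3,1],[2,4,1,5,3],[2,5,4,1,3],[2,5,1,3,4],[3,4,2,5,1],[3,5,2,1,4],[3,5,4,2,1],[3,1,4,5,2],[3,4,5,1,2],[3,1,5,2,4],[4,3,5,2,1],[4,5,1,2,3],[4,5,2,3,1],[4,1,5,3,2],[4,3,1,5,2],[4,1,2,5,3],[5,3,4,1,2],[5,4,1,3,2],[5,4,2,1,3],[5,1,4,2,3],[5,3,1,2,4],[5,1,2,3,4]]"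
  by (simp add: A5_codes_def A5_list_def perm_code_def transpose_def)

lemma A5_codes_orders:
  "\<forall>l \<in> set A5_codes. l = code_id \<or> code_pow l 2 = code_id \<or>
     code_pow l 3 = code_id \<or> code_pow l 5 = code_id"
  unfolding A5_codes_eq code_pow_def code_id_def perm_code_def by code_simp

lemma A5_codes_count_orders:
  "length (filter (\<lambda>l. l \<noteq> code_id \<and> code_pow l 2 = code_id) A5_codes) = 15"
  "length (filter (\<lambda>l. l \<noteq> code_id \<and> code_pow l 3 = code_id) A5_codes) = 20"
  "length (filter (\<lambda>l. l \<noteq> code_id \<and> code_pow l 5 = code_id) A5_codes) = 24"
  unfolding A5_codes_eq code_pow_def code_id_def perm_code_def by code_simp+

lemma A5_codes_centralizer_involution:
  "\<forall>t \<in> set A5_codes. t \<noteq> code_id \<and> code_pow t 2 = code_id \<longrightarrow>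
     length (filter (\<lambda>g. code_comp g t = code_comp t g) A5_codes) = 4"
  unfolding A5_codes_eq code_pow_def code_id_def perm_code_def by code_simp

lemma A5_codes_involution_product:
  "\<forall>t \<in> set A5_codes. code_pow t 2 = code_id \<longrightarrow>
     (\<exists>a \<in> set A5_codes. code_pow a 3 = code_id \<and>
        code_pow (code_comp a (code_comp a t)) 3 = code_id)"
  unfolding A5_codes_eq code_pow_def code_id_def perm_code_def by code_simp


lemma A5_list_even_permutations: "p \<in> set A5_list \<Longrightarrow> p permutes {1..5} \<and> evenperm p"
  by (auto simp: A5_list_def permutes_compose permutes_swap_id evenperm_comp permutation_compose
      permutation_swap_id evenperm_swap)

lemma distinct_A5_codes: "distinct A5_codes"
  by (simp add: A5_codes_eq)

lemma carrier_alt_group_5: "carrier (alt_group 5) = set A5_list"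
proof -
  have sub: "set A5_list \<subseteq> carrier (alt_group 5)"
    using A5_list_even_permutations by (auto simp: alt_group_carrier)
  have "distinct A5_list" using distinct_A5_codes by (simp add: A5_codes_def distinct_map)
  moreover have "length A5_list = 60" by (simp add: A5_list_def)
  ultimately have "card (set A5_list) = 60" by (simp add: distinct_card)
  moreover have "2 * card (carrier (alt_group 5)) = fact 5" by (rule alt_group_card_carrier) simp
  hence card: "card (carrier (alt_group 5)) = 60" by (simp add: fact_numeral)
  moreover have "finite (carrier (alt_group 5))" using card by (intro card_ge_0_finite) simp
  ultimately show ?thesis using card_subset_eq[OF _ sub] by simp
qed

lemma perm_code_inj:
  assumes "p permutes {1..5}" "q permutes {1..5}" "perm_code p = perm_code q"
  shows "p = q"
proof
  fix x
  show "p x = q x"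
  proof (cases "x \<in> {1..5}")
    case True
    hence "x = 1 \<or> x = 2 \<or> x = 3 \<or> x = 4 \<or> x = 5" by auto
    thus ?thesis using assms(3) by (auto simp: perm_code_def)
  next
    case False
    thus ?thesis using assms(1,2) by (simp add: permutes_not_in)
  qed
qed

lemma perm_code_comp:
  assumes "q permutes {1..5}"
  shows "perm_code (p \<circ> q) = code_comp (perm_code p) (perm_code q)"
proof -
  have "perm_code p ! (q i - 1) = p (q i)" if "i \<in> {1..5}" for i
  proof -
    have "q i \<in> {1..5}" using that assms by (simp only: permutes_in_image)
    hence "q i = 1 \<or> q i = 2 \<or> q i = 3 \<or> q i = 4 \<or> q i = 5" by auto
    thus ?thesis by (auto simp: perm_code_def)
  qed
  thus ?thesis by (simp add: perm_code_def code_comp_def)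
qed

lemma perm_code_funpow:
  assumes "p permutes {1..5}"
  shows "perm_code (p ^^ n) = code_pow (perm_code p) n"
proof (induction n)
  case (Suc n)
  have "perm_code (p ^^ Suc n) = code_comp (perm_code p) (perm_code (p ^^ n))"
    using perm_code_comp[OF permutes_funpow[OF assms]] by (simp only: funpow.simps(2))
  also have "\<dots> = code_pow (perm_code p) (Suc n)" using Suc by (simp add: code_pow_def)
  finally show ?case .
qed (simp add: code_id_def code_pow_def id_def)

lemma perm_code_eq_id_iff: "p permutes {1..5} \<Longrightarrow> perm_code p = code_id \<longleftrightarrow> p = id"
  using perm_code_inj[of p id] permutes_id by (auto simp: code_id_def)

lemma card_alt_group_5_filter:
  "card {p \<in> carrier (alt_group 5). Q (perm_code p)} = length (filter Q A5_codes)"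
proof -
  have inj: "inj_on perm_code (set A5_list)"
    using distinct_A5_codes by (simp add: A5_codes_def distinct_map)
  have "perm_code ` {p \<in> set A5_list. Q (perm_code p)} = {l \<in> set A5_codes. Q l}"
    by (auto simp: A5_codes_def)
  hence "card {p \<in> set A5_list. Q (perm_code p)} = card {l \<in> set A5_codes. Q l}"
    using card_image[OF inj_on_subset[OF inj]] by (metis (no_types, lifting) mem_Collect_eq subsetI)
  also have "\<dots> = length (filter Q A5_codes)"
    using distinct_A5_codes distinct_length_filter[of A5_codes Q]
    by (simp add: Collect_conj_eq Int_commute)
  finally show ?thesis by (simp add: carrier_alt_group_5)
qed

lemma alt_group_5_permutes: "p \<in> carrier (alt_group 5) \<Longrightarrow> p permutes {1..5}"
  by (simp add: alt_group_carrier)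

lemma perm_code_mem_A5_codes: "p \<in> carrier (alt_group 5) \<Longrightarrow> perm_code p \<in> set A5_codes"
  by (simp add: carrier_alt_group_5 A5_codes_def)

lemma funpow_eq_id_iff_code:
  "p permutes {1..5} \<Longrightarrow> p ^^ n = id \<longleftrightarrow> code_pow (perm_code p) n = code_id"
  using perm_code_eq_id_iff[OF permutes_funpow] perm_code_funpow by metis

lemma alt_group_5_orders:
  assumes "p \<in> carrier (alt_group 5)"
  shows "p = id \<or> p ^^ 2 = id \<or> p ^^ 3 = id \<or> p ^^ 5 = id"
  using A5_codes_orders perm_code_mem_A5_codes[OF assms]
    perm_code_eq_id_iff funpow_eq_id_iff_code alt_group_5_permutes[OF assms] by metis

lemma card_elems_of_order_alt_group_5:
  "card (elems_of_order (carrier (alt_group 5)) 2) = 15"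
  "card (elems_of_order (carrier (alt_group 5)) 3) = 20"
  "card (elems_of_order (carrier (alt_group 5)) 5) = 24"
proof -
  have "card (elems_of_order (carrier (alt_group 5)) n) =
      length (filter (\<lambda>l. l \<noteq> code_id \<and> code_pow l n = code_id) A5_codes)" for n
  proof -
    have "elems_of_order (carrier (alt_group 5)) n =
        {p \<in> carrier (alt_group 5). perm_code p \<noteq> code_id \<and> code_pow (perm_code p) n = code_id}"
      using alt_group_5_permutes perm_code_eq_id_iff funpow_eq_id_iff_code
      by (auto simp: elems_of_order_def)
    thus ?thesis using card_alt_group_5_filter[of "\<lambda>l. l \<noteq> code_id \<and> code_pow l n = code_id"]
      by simp
  qed
  thus "card (elems_of_order (carrier (alt_group 5)) 2) = 15"
    "card (elems_of_order (carrier (alt_group 5)) 3) = 20"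
    "card (elems_of_order (carrier (alt_group 5)) 5) = 24"
    using A5_codes_count_orders by simp_all
qed

lemma card_centralizer_involution_alt_group_5:
  assumes "t \<in> elems_of_order (carrier (alt_group 5)) 2"
  shows "card (centralizer (carrier (alt_group 5)) t) = 4"
proof -
  have t: "t \<in> carrier (alt_group 5)" "t \<noteq> id" "t ^^ 2 = id"
    using assms by (auto simp: elems_of_order_def)
  note tp = alt_group_5_permutes[OF t(1)]
  have "g \<circ> t = t \<circ> g \<longleftrightarrow> code_comp (perm_code g) (perm_code t) = code_comp (perm_code t) (perm_code g)"
    if "g \<in> carrier (alt_group 5)" for g
    using perm_code_inj[OF permutes_compose[OF tp] permutes_compose[OF _ tp]]
      alt_group_5_permutes[OF that] perm_code_comp tp by metis
  hence "centralizer (carrier (alt_group 5)) t = {g \<in> carrier (alt_group 5).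
      code_comp (perm_code g) (perm_code t) = code_comp (perm_code t) (perm_code g)}"
    by (auto simp: centralizer_def)
  moreover have "perm_code t \<noteq> code_id" "code_pow (perm_code t) 2 = code_id"
    using t tp perm_code_eq_id_iff funpow_eq_id_iff_code by blast+
  ultimately show ?thesis
    using A5_codes_centralizer_involution perm_code_mem_A5_codes[OF t(1)]
      card_alt_group_5_filter[of "\<lambda>l. code_comp l (perm_code t) = code_comp (perm_code t) l"]
    by simp
qed

lemma alt_group_5_involution_product:
  assumes "t \<in> carrier (alt_group 5)" "t ^^ 2 = id"
  shows "\<exists>a\<in>carrier (alt_group 5). \<exists>b\<in>carrier (alt_group 5). a ^^ 3 = id \<and> b ^^ 3 = id \<and> t = a \<circ> b"
proof -
  note tp = alt_group_5_permutes[OF assms(1)]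
  have "code_pow (perm_code t) 2 = code_id" using assms(2) funpow_eq_id_iff_code[OF tp] by blast
  then obtain l where l: "l \<in> set A5_codes" "code_pow l 3 = code_id"
    "code_pow (code_comp l (code_comp l (perm_code t))) 3 = code_id"
    using A5_codes_involution_product perm_code_mem_A5_codes[OF assms(1)] by blast
  then obtain a where a: "a \<in> carrier (alt_group 5)" "l = perm_code a"
    by (auto simp: A5_codes_def carrier_alt_group_5)
  note ap = alt_group_5_permutes[OF a(1)]
  define b where "b = a \<circ> (a \<circ> t)"
  interpret A5: group "alt_group 5" by (rule alt_group_is_group)
  have b: "b \<in> carrier (alt_group 5)"
    using A5.m_closed[OF a(1) A5.m_closed[OF a(1) assms(1)]] by (simp add: b_def alt_group_mult)
  have "a ^^ 3 = id" using l(2) a(2) funpow_eq_id_iff_code[OF ap] by blast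
  moreover have "perm_code b = code_comp l (code_comp l (perm_code t))"
    using a(2) ap tp by (simp add: b_def perm_code_comp permutes_compose)
  hence "b ^^ 3 = id" using l(3) funpow_eq_id_iff_code[OF alt_group_5_permutes[OF b]] by simp
  moreover have "a \<circ> b = a ^^ 3 \<circ> t"
    by (simp add: b_def numeral_3_eq_3 o_assoc)
  ultimately show ?thesis using a(1) b by (metis id_comp)
qed


section \<open>Vertex-transitive graphs with automorphism group \<open>A\<^sub>5\<close>\<close>

lemma prime_3: "prime (3::nat)" and prime_5: "prime (5::nat)"
  by simp_all

lemma evenperm_funpow: "permutation g \<Longrightarrow> evenperm (g ^^ n) \<longleftrightarrow> even n \<or> evenperm g"
  by (induction n) (auto simp: evenperm_comp permutation_funpow)

lemma eq_if_sum_le_lower_bound: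
  fixes \<phi> :: "'a \<Rightarrow> nat"
  assumes "finite S" "\<And>x. x \<in> S \<Longrightarrow> b \<le> \<phi> x" "(\<Sum>x\<in>S. \<phi> x) \<le> b * card S" "x \<in> S"
  shows "\<phi> x = b"
proof (rule ccontr)
  assume "\<phi> x \<noteq> b"
  hence "(\<Sum>y\<in>S. b) < (\<Sum>y\<in>S. \<phi> y)"
    using assms(2,4) by (intro sum_strict_mono_ex1[OF assms(1)]) force+
  thus False using assms(3) by (simp add: mult.commute)
qed

locale A5_graph =
  fixes V :: "'a set" and E :: "'a \<Rightarrow> 'a \<Rightarrow> bool"
  assumes finite_V: "finite V" and simple: "simple_graph V E"
    and vertex_transitive: "vertex_transitive V E" and Aut_iso: "Aut V E \<cong> alt_group 5"
begin

abbreviation "G \<equiv> graph_auts V E"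

sublocale transitive_perm_group V G
  by (rule transitive_perm_group_graph_auts[OF finite_V vertex_transitive])

definition iso_A5 where "iso_A5 = (SOME f. f \<in> iso (perm_monoid G) (alt_group 5))"

lemma iso_A5: "iso_A5 \<in> iso (perm_monoid G) (alt_group 5)"
  using Aut_iso unfolding is_iso_def iso_A5_def Aut_eq_perm_monoid by (metis ex_in_conv someI_ex)

lemma iso_A5_bij: "bij_betw iso_A5 G (carrier (alt_group 5))"
  using iso_A5 by (simp add: iso_def perm_monoid_def)

lemma iso_A5_comp: "g \<in> G \<Longrightarrow> h \<in> G \<Longrightarrow> iso_A5 (g \<circ> h) = iso_A5 g \<circ> iso_A5 h"
  using iso_A5 by (simp add: iso_def hom_def perm_monoid_def alt_group_mult)

lemma iso_A5_id: "iso_A5 id = id"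
proof -
  interpret group_hom "perm_monoid G" "alt_group 5" iso_A5
    using iso_A5 group alt_group_is_group by (simp add: group_hom_def group_hom_axioms_def iso_def)
  show ?thesis using hom_one by (simp add: perm_monoid_def alt_group_one)
qed

lemma iso_A5_eq_iff: "g \<in> G \<Longrightarrow> h \<in> G \<Longrightarrow> iso_A5 g = iso_A5 h \<longleftrightarrow> g = h"
  using iso_A5_bij by (auto simp: bij_betw_def inj_on_def)

lemma iso_A5_eq_id_iff: "g \<in> G \<Longrightarrow> iso_A5 g = id \<longleftrightarrow> g = id"
  using iso_A5_eq_iff[OF _ id_mem] iso_A5_id by simp

lemma funpow_mem: "g \<in> G \<Longrightarrow> g ^^ n \<in> G"
  by (induction n) (simp_all add: id_mem comp_mem)

lemma iso_A5_funpow: "g \<in> G \<Longrightarrow> iso_A5 (g ^^ n) = iso_A5 g ^^ n"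
  by (induction n) (simp_all add: iso_A5_id iso_A5_comp funpow_mem)

lemma funpow_eq_id_iff_iso_A5: "g \<in> G \<Longrightarrow> g ^^ n = id \<longleftrightarrow> iso_A5 g ^^ n = id"
  using iso_A5_eq_id_iff[OF funpow_mem] iso_A5_funpow by metis

lemma card_G: "card G = 60"
proof -
  have "2 * card (carrier (alt_group 5)) = fact 5" by (rule alt_group_card_carrier) simp
  thus ?thesis using bij_betw_same_card[OF iso_A5_bij] by (simp add: fact_numeral)
qed

lemma card_transfer:
  assumes "\<And>g. g \<in> G \<Longrightarrow> P g \<longleftrightarrow> Q (iso_A5 g)"
  shows "card {g \<in> G. P g} = card {p \<in> carrier (alt_group 5). Q p}"
proof -
  have img: "iso_A5 ` G = carrier (alt_group 5)" and inj: "inj_on iso_A5 G"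
    using iso_A5_bij by (simp_all add: bij_betw_def)
  have "iso_A5 ` {g \<in> G. P g} = {p \<in> carrier (alt_group 5). Q p}"
  proof
    show "iso_A5 ` {g \<in> G. P g} \<subseteq> {p \<in> carrier (alt_group 5). Q p}"
      using img assms by blast
    show "{p \<in> carrier (alt_group 5). Q p} \<subseteq> iso_A5 ` {g \<in> G. P g}"
    proof
      fix p assume p: "p \<in> {p \<in> carrier (alt_group 5). Q p}"
      then obtain g where "g \<in> G" "p = iso_A5 g" using img by blast
      thus "p \<in> iso_A5 ` {g \<in> G. P g}" using p assms by blast
    qed
  qed
  moreover have "card (iso_A5 ` {g \<in> G. P g}) = card {g \<in> G. P g}"
    by (rule card_image[OF inj_on_subset[OF inj]]) blast
  ultimately show ?thesis by simp
qed

lemma card_elems_of_order: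
  "card (elems_of_order G 2) = 15" "card (elems_of_order G 3) = 20" "card (elems_of_order G 5) = 24"
proof -
  have "card (elems_of_order G n) = card (elems_of_order (carrier (alt_group 5)) n)" for n
    unfolding elems_of_order_def
    by (rule card_transfer) (use iso_A5_eq_id_iff funpow_eq_id_iff_iso_A5 in blast)
  thus "card (elems_of_order G 2) = 15" "card (elems_of_order G 3) = 20"
    "card (elems_of_order G 5) = 24"
    using card_elems_of_order_alt_group_5 by simp_all
qed

lemma card_centralizer_involution:
  assumes "t \<in> elems_of_order G 2"
  shows "card (centralizer G t) = 4"
proof -
  have t: "t \<in> G" using assms by (simp add: elems_of_order_def)
  have "card (centralizer G t) = card (centralizer (carrier (alt_group 5)) (iso_A5 t))"
    unfolding centralizer_def
  proof (rule card_transfer)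
    fix g assume g: "g \<in> G"
    have "g \<circ> t = t \<circ> g \<longleftrightarrow> iso_A5 (g \<circ> t) = iso_A5 (t \<circ> g)"
      using iso_A5_bij comp_mem[OF g t] comp_mem[OF t g] by (auto simp: bij_betw_def inj_on_def)
    thus "g \<circ> t = t \<circ> g \<longleftrightarrow> iso_A5 g \<circ> iso_A5 t = iso_A5 t \<circ> iso_A5 g"
      using iso_A5_comp g t by simp
  qed
  moreover have "iso_A5 t \<in> elems_of_order (carrier (alt_group 5)) 2"
    using assms iso_A5_bij iso_A5_eq_id_iff funpow_eq_id_iff_iso_A5
    by (auto simp: elems_of_order_def bij_betw_def)
  ultimately show ?thesis using card_centralizer_involution_alt_group_5 by simp
qed

lemma iso_A5_mem: "g \<in> G \<Longrightarrow> iso_A5 g \<in> carrier (alt_group 5)"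
  using iso_A5_bij by (auto simp: bij_betw_def)

lemma iso_A5_surj: "p \<in> carrier (alt_group 5) \<Longrightarrow> \<exists>g\<in>G. p = iso_A5 g"
  using iso_A5_bij by (auto simp: bij_betw_def)

lemma elem_orders:
  assumes "g \<in> G"
  shows "g = id \<or> g \<in> elems_of_order G 2 \<or> g \<in> elems_of_order G 3 \<or> g \<in> elems_of_order G 5"
proof -
  have "iso_A5 g = id \<or> iso_A5 g ^^ 2 = id \<or> iso_A5 g ^^ 3 = id \<or> iso_A5 g ^^ 5 = id"
    by (rule alt_group_5_orders[OF iso_A5_mem[OF assms]])
  hence "g = id \<or> g ^^ 2 = id \<or> g ^^ 3 = id \<or> g ^^ 5 = id"
    by (simp only: iso_A5_eq_id_iff[OF assms] funpow_eq_id_iff_iso_A5[OF assms, symmetric])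
  thus ?thesis using assms by (auto simp: elems_of_order_def)
qed

text \<open>\<open>A\<^sub>5\<close> is generated by its elements of odd order, so it acts by even permutations.\<close>
lemma evenperm_G:
  assumes "g \<in> G"
  shows "evenperm g"
proof -
  have odd_order_even: "evenperm h" if "h \<in> G" "odd n" "h ^^ n = id" for h n
    using evenperm_funpow[of h n] that permutes_imp_permutation[OF finite_X permutes] by simp
  show ?thesis
  proof (cases "g ^^ 2 = id")
    case True
    hence "iso_A5 g ^^ 2 = id" using funpow_eq_id_iff_iso_A5[OF assms] by simp
    then obtain a' b' where ab': "a' \<in> carrier (alt_group 5)" "b' \<in> carrier (alt_group 5)"
      "a' ^^ 3 = id" "b' ^^ 3 = id" "iso_A5 g = a' \<circ> b'"
      using alt_group_5_involution_product[OF iso_A5_mem[OF assms]] by blast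
    obtain a b where ab: "a \<in> G" "b \<in> G" "a' = iso_A5 a" "b' = iso_A5 b"
      using iso_A5_surj[OF ab'(1)] iso_A5_surj[OF ab'(2)] by blast
    have "iso_A5 g = iso_A5 (a \<circ> b)" using ab ab'(5) iso_A5_comp by simp
    hence "g = a \<circ> b" using iso_A5_eq_iff[OF assms comp_mem[OF ab(1,2)]] by simp
    moreover have "evenperm a" "evenperm b"
      using odd_order_even[of _ 3] ab ab'(3,4) funpow_eq_id_iff_iso_A5 by auto
    ultimately show ?thesis
      using ab(1,2) permutes_imp_permutation[OF finite_X permutes] by (simp add: evenperm_comp)
  next
    case False
    hence "g = id \<or> g ^^ 3 = id \<or> g ^^ 5 = id"
      using elem_orders[OF assms] by (auto simp: elems_of_order_def)
    thus ?thesis using odd_order_even[OF assms, of 3] odd_order_even[OF assms, of 5] by auto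
  qed
qed

lemma card_V_diff_fix_points: "g \<in> G \<Longrightarrow> card (V - fix_points V g) = card V - card (fix_points V g)"
  using finite_X by (intro card_Diff_subset) (auto simp: fix_points_def)

lemma involution_moves_multiple_of_4:
  assumes "t \<in> elems_of_order G 2"
  shows "4 dvd card V - card (fix_points V t)" "card (fix_points V t) < card V"
proof -
  have t: "t \<in> G" "t \<noteq> id" "t \<circ> t = id"
    using assms by (auto simp: elems_of_order_def numeral_2_eq_2)
  show "4 dvd card V - card (fix_points V t)"
    using involution_card_moved[OF finite_X permutes[OF t(1)] t(3)] evenperm_G[OF t(1)]
      card_V_diff_fix_points[OF t(1)] by simp
  show "card (fix_points V t) < card V" by (rule card_fix_points_less[OF finite_X permutes[OF t(1)] t(2)])
qed

lemma prime_order_moves_multiple_of_p: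
  assumes "prime p" "g \<in> elems_of_order G p"
  shows "p dvd card V - card (fix_points V g)" "card (fix_points V g) < card V"
proof -
  have g: "g \<in> G" "g \<noteq> id" "g ^^ p = id" using assms(2) by (auto simp: elems_of_order_def)
  show "p dvd card V - card (fix_points V g)"
    using prime_dvd_card_moved[OF finite_X permutes[OF g(1)] assms(1) g(3,2)]
      card_V_diff_fix_points[OF g(1)] by simp
  show "card (fix_points V g) < card V" by (rule card_fix_points_less[OF finite_X permutes[OF g(1)] g(2)])
qed

lemma card_fix_points_pos: "v \<in> V \<Longrightarrow> g \<in> stab G v \<Longrightarrow> 0 < card (fix_points V g)"
  using finite_X by (auto simp: card_gt_0_iff stab_def fix_points_def)

lemma elems_of_order_disjoint:
  assumes "prime p" "0 < q" "q < p"
  shows "elems_of_order G p \<inter> elems_of_order G q = {}"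
  using funpow_eq_id_imp_id_prime[OF assms(1) _ assms(2,3)] by (auto simp: elems_of_order_def)

lemma sum_by_order:
  assumes "S \<subseteq> G" "id \<in> S"
  shows "(\<Sum>g\<in>S. \<phi> g) = \<phi> id + (\<Sum>g\<in>S \<inter> elems_of_order G 2. \<phi> g)
    + (\<Sum>g\<in>S \<inter> elems_of_order G 3. \<phi> g) + (\<Sum>g\<in>S \<inter> elems_of_order G 5. \<phi> g)"
proof -
  let ?S2 = "S \<inter> elems_of_order G 2" and ?S3 = "S \<inter> elems_of_order G 3"
    and ?S5 = "S \<inter> elems_of_order G 5"
  have fin: "finite S" using finite_subset[OF assms(1) finite_H] .
  have "S = insert id (?S2 \<union> ?S3 \<union> ?S5)" using elem_orders assms by blast
  hence "sum \<phi> S = sum \<phi> (insert id (?S2 \<union> ?S3 \<union> ?S5))" by (rule arg_cong)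
  also have "\<dots> = \<phi> id + sum \<phi> (?S2 \<union> ?S3 \<union> ?S5)"
    using fin by (intro sum.insert) (auto simp: elems_of_order_def)
  also have "sum \<phi> (?S2 \<union> ?S3 \<union> ?S5) = sum \<phi> (?S2 \<union> ?S3) + sum \<phi> ?S5"
    using fin elems_of_order_disjoint[of 5 2] elems_of_order_disjoint[of 5 3]
    by (intro sum.union_disjoint) auto
  also have "sum \<phi> (?S2 \<union> ?S3) = sum \<phi> ?S2 + sum \<phi> ?S3"
    using fin elems_of_order_disjoint[of 3 2] by (intro sum.union_disjoint) auto
  finally show ?thesis by (simp only: add.assoc)
qed

lemma card_V_ge_5: "5 \<le> card V"
proof (rule ccontr)
  assume "\<not> 5 \<le> card V"
  have "card G \<le> card {p. p permutes V}"
    using permutes finite_permutations[OF finite_X] by (intro card_mono) auto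
  also have "\<dots> = fact (card V)" by (rule card_permutations[OF refl finite_X])
  also have "\<dots> \<le> fact 4" using \<open>\<not> 5 \<le> card V\<close> by (intro fact_mono) simp
  finally show False using card_G by (simp add: fact_numeral)
qed

lemma burnside_G:
  "card V + (\<Sum>g\<in>elems_of_order G 2. card (fix_points V g)) + (\<Sum>g\<in>elems_of_order G 3. card (fix_points V g))
    + (\<Sum>g\<in>elems_of_order G 5. card (fix_points V g)) = 60"
proof -
  have "V \<noteq> {}" using card_V_ge_5 by auto
  hence "orb G ` V = {V}" using orb_eq_X by auto
  hence "(\<Sum>g\<in>G. card (fix_points V g)) = 60"
    using card_orbits_mult_card[OF finite_H finite_X] card_G by simp
  moreover have "G \<inter> elems_of_order G p = elems_of_order G p" for p
    by (auto simp: elems_of_order_def)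
  moreover have "fix_points V id = V" by (simp add: fix_points_def)
  ultimately show ?thesis
    using sum_by_order[OF subset_refl id_mem, of "\<lambda>g. card (fix_points V g)"] by simp
qed

lemma burnside_stab:
  assumes "v \<in> V"
  shows "card (orb (stab G v) ` V) * card (stab G v) = card V
      + (\<Sum>g\<in>stab G v \<inter> elems_of_order G 2. card (fix_points V g))
      + (\<Sum>g\<in>stab G v \<inter> elems_of_order G 3. card (fix_points V g))
      + (\<Sum>g\<in>stab G v \<inter> elems_of_order G 5. card (fix_points V g))"
    and "card (stab G v) = 1 + card (stab G v \<inter> elems_of_order G 2)
      + card (stab G v \<inter> elems_of_order G 3) + card (stab G v \<inter> elems_of_order G 5)"
proof -
  have sub: "stab G v \<subseteq> G" and idH: "id \<in> stab G v" by (auto simp: stab_def id_mem)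
  have fin: "finite (stab G v)" using finite_subset[OF sub finite_H] .
  show "card (orb (stab G v) ` V) * card (stab G v) = card V
      + (\<Sum>g\<in>stab G v \<inter> elems_of_order G 2. card (fix_points V g))
      + (\<Sum>g\<in>stab G v \<inter> elems_of_order G 3. card (fix_points V g))
      + (\<Sum>g\<in>stab G v \<inter> elems_of_order G 5. card (fix_points V g))"
    using perm_group.card_orbits_mult_card[OF perm_group_stab fin finite_X]
      sum_by_order[OF sub idH, of "\<lambda>g. card (fix_points V g)"]
    by (simp add: fix_points_def[of V id])
  show "card (stab G v) = 1 + card (stab G v \<inter> elems_of_order G 2)
      + card (stab G v \<inter> elems_of_order G 3) + card (stab G v \<inter> elems_of_order G 5)"
    using sum_by_order[OF sub idH, of "\<lambda>_. 1::nat"] by simp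
qed

lemma adjacency_stab_invariant:
  assumes "v \<in> V" "u \<in> V" "w \<in> orb (stab G v) u"
  shows "E v w \<longleftrightarrow> E v u"
proof -
  obtain h where "h \<in> stab G v" "h u = w" using assms(3) by (auto simp: orb_def)
  thus ?thesis using graph_auts_aut_iff[of h V E v u] assms(1,2) by (auto simp: stab_def)
qed

lemma G_ne_permutations: "G \<noteq> {p. p permutes V}"
proof
  assume "G = {p. p permutes V}"
  hence "fact (card V) = (60::nat)" using card_permutations[OF refl finite_X] card_G by simp
  moreover have "(fact 5::nat) \<le> fact (card V)" using card_V_ge_5 by (rule fact_mono)
  ultimately show False by (simp add: fact_numeral)
qed

lemma not_uniform_nbhd: "v \<in> V \<Longrightarrow> (\<And>w. w \<in> V \<Longrightarrow> E v w \<longleftrightarrow> c \<and> w \<noteq> v) \<Longrightarrow> False"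
  using graph_auts_eq_permutations_if_uniform_nbhd[OF vertex_transitive] G_ne_permutations by blast

text \<open>Otherwise the stabiliser would be transitive on the other vertices, and the graph would be
  complete or empty.\<close>
lemma three_le_card_stab_orbits:
  assumes v: "v \<in> V"
  shows "3 \<le> card (orb (stab G v) ` V)"
proof (rule ccontr)
  let ?H = "stab G v"
  interpret H: perm_group V ?H by (rule perm_group_stab)
  assume small: "\<not> 3 \<le> card (orb ?H ` V)"
  have "V \<noteq> {v}" using card_V_ge_5 by auto
  then obtain w where w: "w \<in> V" "w \<noteq> v" using v by blast
  have orb_v: "orb ?H v = {v}" using H.mem_orb_self[of v] by (auto simp: orb_def stab_def)
  have not_v: "orb ?H u \<noteq> {v}" if "u \<noteq> v" for u using H.mem_orb_self[of u] that by auto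
  have orb_w: "orb ?H u = orb ?H w" if u: "u \<in> V" "u \<noteq> v" for u
  proof (rule ccontr)
    assume "orb ?H u \<noteq> orb ?H w"
    moreover have "{v} \<noteq> orb ?H w" "{v} \<noteq> orb ?H u" using not_v w(2) u(2) by metis+
    ultimately have "card {{v}, orb ?H w, orb ?H u} = 3" by simp
    moreover have "{{v}, orb ?H w, orb ?H u} \<subseteq> orb ?H ` V" using v w u orb_v by auto
    ultimately have "3 \<le> card (orb ?H ` V)"
      using card_mono[OF finite_imageI[OF finite_X]] by metis
    thus False using small by simp
  qed
  have "E v u \<longleftrightarrow> E v w \<and> u \<noteq> v" if "u \<in> V" for u
  proof (cases "u = v")
    case False
    hence "u \<in> orb ?H w" using orb_w[OF that] H.mem_orb_self[of u] by simp
    thus ?thesis using adjacency_stab_invariant[OF v w(1)] False by simp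
  qed (use simple in \<open>simp add: simple_graph_def\<close>)
  thus False by (rule not_uniform_nbhd[OF v])
qed

lemma card_stab: "v \<in> V \<Longrightarrow> card V * card (stab G v) = 60"
  using card_X_mult_card_stab card_G by simp

lemma stab_inter_elems_of_order_empty:
  assumes "v \<in> V" "\<And>g. g \<in> elems_of_order G p \<Longrightarrow> card (fix_points V g) = 0"
  shows "stab G v \<inter> elems_of_order G p = {}"
proof (rule equals0I)
  fix g assume "g \<in> stab G v \<inter> elems_of_order G p"
  thus False using card_fix_points_pos[OF assms(1)] assms(2) by fastforce
qed

lemma card_V_ne_5: "card V \<noteq> 5"
proof
  assume n: "card V = 5"
  obtain v where v: "v \<in> V" using card_V_ge_5 by fastforce
  have fix2: "card (fix_points V g) = 1" if "g \<in> elems_of_order G 2" for g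
    using involution_moves_multiple_of_4[OF that] n by presburger
  have fix3: "card (fix_points V g) = 2" if "g \<in> elems_of_order G 3" for g
    using prime_order_moves_multiple_of_p[OF prime_3 that] n by presburger
  have "card (fix_points V g) = 0" if "g \<in> elems_of_order G 5" for g
    using prime_order_moves_multiple_of_p[OF prime_5 that] n by presburger
  hence none5: "stab G v \<inter> elems_of_order G 5 = {}" by (rule stab_inter_elems_of_order_empty[OF v])
  have "card (stab G v) = 12" using card_stab[OF v] n by simp
  thus False
    using burnside_stab[OF v] three_le_card_stab_orbits[OF v] none5 n fix2 fix3 by simp
qed

lemma card_V_ne_6: "card V \<noteq> 6"
proof
  assume n: "card V = 6"
  obtain v where v: "v \<in> V" using card_V_ge_5 by fastforce
  have fix2: "card (fix_points V g) = 2" if "g \<in> elems_of_order G 2" for g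
    using involution_moves_multiple_of_4[OF that] n by presburger
  have fix5: "card (fix_points V g) = 1" if "g \<in> elems_of_order G 5" for g
    using prime_order_moves_multiple_of_p[OF prime_5 that] n by presburger
  have "(\<Sum>g\<in>elems_of_order G 3. card (fix_points V g)) = 0"
    using burnside_G n fix2 fix5 card_elems_of_order by simp
  hence "card (fix_points V g) = 0" if "g \<in> elems_of_order G 3" for g
    using that finite_subset[OF _ finite_H, of "elems_of_order G 3"] by (auto simp: elems_of_order_def)
  hence none3: "stab G v \<inter> elems_of_order G 3 = {}" by (rule stab_inter_elems_of_order_empty[OF v])
  have "card (stab G v) = 10" using card_stab[OF v] n by simp
  thus False
    using burnside_stab[OF v] three_le_card_stab_orbits[OF v] none3 n fix2 fix5 by simp
qed

lemma fix_counts_10: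
  assumes n: "card V = 10"
  shows "g \<in> elems_of_order G 2 \<Longrightarrow> card (fix_points V g) = 2"
    and "g \<in> elems_of_order G 3 \<Longrightarrow> card (fix_points V g) = 1"
    and "g \<in> elems_of_order G 5 \<Longrightarrow> card (fix_points V g) = 0"
proof -
  have fin: "finite (elems_of_order G p)" for p
    using finite_subset[OF _ finite_H] by (auto simp: elems_of_order_def)
  have lb2: "2 \<le> card (fix_points V g)" if "g \<in> elems_of_order G 2" for g
    using involution_moves_multiple_of_4[OF that] n by presburger
  have lb3: "1 \<le> card (fix_points V g)" if "g \<in> elems_of_order G 3" for g
    using prime_order_moves_multiple_of_p[OF prime_3 that] n by presburger
  have "2 * 15 \<le> (\<Sum>g\<in>elems_of_order G 2. card (fix_points V g))"
    using sum_bounded_below[of "elems_of_order G 2" 2 "\<lambda>g. card (fix_points V g)"] lb2 card_elems_of_order(1) by simp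
  moreover have "1 * 20 \<le> (\<Sum>g\<in>elems_of_order G 3. card (fix_points V g))"
    using sum_bounded_below[of "elems_of_order G 3" 1 "\<lambda>g. card (fix_points V g)"] lb3 card_elems_of_order(2) by simp
  ultimately have "(\<Sum>g\<in>elems_of_order G 2. card (fix_points V g)) \<le> 2 * card (elems_of_order G 2)"
    "(\<Sum>g\<in>elems_of_order G 3. card (fix_points V g)) \<le> 1 * card (elems_of_order G 3)"
    "(\<Sum>g\<in>elems_of_order G 5. card (fix_points V g)) = 0"
    using burnside_G n card_elems_of_order by simp_all
  thus "g \<in> elems_of_order G 2 \<Longrightarrow> card (fix_points V g) = 2"
    "g \<in> elems_of_order G 3 \<Longrightarrow> card (fix_points V g) = 1"
    "g \<in> elems_of_order G 5 \<Longrightarrow> card (fix_points V g) = 0"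
    using eq_if_sum_le_lower_bound[OF fin lb2] eq_if_sum_le_lower_bound[OF fin lb3] fin
    by simp_all
qed

lemma card_stab_orbits_10:
  assumes "card V = 10" "v \<in> V"
  shows "card (orb (stab G v) ` V) = 3"
proof -
  have "stab G v \<inter> elems_of_order G 5 = {}"
    using stab_inter_elems_of_order_empty[OF assms(2)] fix_counts_10(3)[OF assms(1)] by blast
  moreover have "card (stab G v) = 6" using card_stab[OF assms(2)] assms(1) by simp
  ultimately show ?thesis
    using burnside_stab[OF assms(2)] fix_counts_10(1,2)[OF assms(1)] assms(1) by simp
qed

lemma stab_orbits_10:
  assumes n: "card V = 10" and v: "v \<in> V"
  obtains P Q where "P \<in> orb (stab G v) ` V" "Q \<in> orb (stab G v) ` V" "card P = 3" "card Q = 6"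
    "P \<inter> Q = {}" "P \<union> Q = V - {v}"
proof -
  let ?H = "stab G v"
  interpret H: perm_group V ?H by (rule perm_group_stab)
  have orb_v: "orb ?H v = {v}" using H.mem_orb_self[of v] by (auto simp: orb_def stab_def)
  have fin: "finite (orb ?H ` V)" using finite_X by simp
  have "{v} \<in> orb ?H ` V" using orb_v v by (metis imageI)
  hence "card (orb ?H ` V - {{v}}) = 2"
    using card_stab_orbits_10[OF n v] fin by (simp add: card_Diff_singleton)
  then obtain O1 O2 where O12: "orb ?H ` V - {{v}} = {O1, O2}" "O1 \<noteq> O2"
    by (auto simp: card_2_iff)
  have orbit: "\<exists>w\<in>V - {v}. B = orb ?H w" if B: "B \<in> {O1, O2}" for B
  proof -
    have "B \<in> orb ?H ` V" "B \<noteq> {v}" using B O12(1) by blast+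
    then obtain w where w: "w \<in> V" "B = orb ?H w" by blast
    moreover have "w \<noteq> v" using \<open>B \<noteq> {v}\<close> w(2) orb_v by blast
    ultimately show ?thesis by blast
  qed
  have sub: "B \<subseteq> V - {v}" if B: "B \<in> {O1, O2}" for B
  proof -
    obtain w where w: "w \<in> V - {v}" "B = orb ?H w" using orbit[OF B] by blast
    have "v \<notin> orb ?H w"
    proof
      assume "v \<in> orb ?H w"
      hence "orb ?H w = {v}" using H.orb_eq orb_v by metis
      thus False using H.mem_orb_self[of w] w(1) by auto
    qed
    thus ?thesis using H.orb_subset[of w] w by blast
  qed
  obtain w1 where w1: "O1 = orb ?H w1" using orbit[of O1] by blast
  obtain w2 where w2: "O2 = orb ?H w2" using orbit[of O2] by blast
  have disj: "O1 \<inter> O2 = {}" using H.orb_eq_or_disjoint[of w1 w2] w1 w2 O12(2) by blast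
  have cover: "O1 \<union> O2 = V - {v}"
  proof
    show "V - {v} \<subseteq> O1 \<union> O2"
    proof
      fix u assume u: "u \<in> V - {v}"
      have "orb ?H u \<noteq> {v}" using H.mem_orb_self[of u] u by auto
      hence "orb ?H u \<in> {O1, O2}" using O12(1) u by blast
      thus "u \<in> O1 \<union> O2" using H.mem_orb_self[of u] by blast
    qed
  qed (use sub in blast)
  have "finite O1" "finite O2" using sub finite_X by (blast intro: finite_subset)+
  hence "card O1 + card O2 = card (V - {v})" using card_Un_disjoint[OF _ _ disj] cover by simp
  also have "\<dots> = 9" using n v finite_X by simp
  finally have sum9: "card O1 + card O2 = 9" .
  have card_orbit: "card B \<in> {1, 2, 3, 6}" if B: "B \<in> {O1, O2}" for B
  proof -
    obtain w where w: "w \<in> V - {v}" "B = orb ?H w" using orbit[OF B] by blast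
    have "finite ?H" using finite_subset[OF _ finite_H] by (auto simp: stab_def)
    hence "card B * card (stab ?H w) = 6"
      using H.card_orb_mult_card_stab w card_stab[OF v] n by simp
    hence dvd: "card B dvd 6" by (metis dvd_triv_left)
    hence "card B \<le> 6" by (rule dvd_imp_le) simp
    moreover have "card B \<noteq> 0" using dvd by (metis dvd_0_left_iff zero_neq_numeral)
    ultimately have "card B \<in> {1, 2, 3, 4, 5, 6}" by auto
    thus ?thesis using dvd by auto
  qed
  have "card O1 \<in> {1, 2, 3, 6}" "card O2 \<in> {1, 2, 3, 6}" using card_orbit by simp_all
  hence "card O1 = 3 \<and> card O2 = 6 \<or> card O1 = 6 \<and> card O2 = 3" using sum9 by auto
  moreover have "O1 \<in> orb ?H ` V" "O2 \<in> orb ?H ` V" using O12(1) by blast+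
  ultimately show thesis using that disj cover by (metis Int_commute Un_commute)
qed

lemma no_rank3_cubic_graph:
  assumes "simple_graph V E'" and auts: "graph_auts V E' = G" and "v \<in> V" "card V = 10"
    "card (nbhd V E' v) = 3"
    and trans_N: "\<And>x y. x \<in> nbhd V E' v \<Longrightarrow> y \<in> nbhd V E' v \<Longrightarrow> \<exists>h\<in>G. h v = v \<and> h x = y"
    and trans_M: "\<And>x y. x \<in> V - insert v (nbhd V E' v) \<Longrightarrow> y \<in> V - insert v (nbhd V E' v) \<Longrightarrow>
      \<exists>h\<in>G. h v = v \<and> h x = y"
  shows False
proof -
  interpret cubic_rank3_graph V E' v
  proof
    show "vertex_transitive V E'"
      using vertex_transitive auts by (simp add: vertex_transitive_def)
    show "\<exists>h\<in>graph_auts V E'. h v = v \<and> h x = y" if "x \<in> nbhd V E' v" "y \<in> nbhd V E' v" for x y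
      using trans_N[OF that] auts by simp
    show "\<exists>h\<in>graph_auts V E'. h v = v \<and> h x = y"
      if "x \<in> V - insert v (nbhd V E' v)" "y \<in> V - insert v (nbhd V E' v)" for x y
      using trans_M[OF that] auts by simp
  qed (use assms in simp_all)
  obtain \<tau> where "\<tau> \<in> G" "\<not> evenperm \<tau>" using odd_automorphism auts by blast
  thus False using evenperm_G by blast
qed

lemma card_V_ne_10: "card V \<noteq> 10"
proof
  assume n: "card V = 10"
  obtain v where v: "v \<in> V" using card_V_ge_5 by fastforce
  let ?H = "stab G v"
  interpret H: perm_group V ?H by (rule perm_group_stab)
  obtain P Q where PQ: "P \<in> orb ?H ` V" "Q \<in> orb ?H ` V" "card P = 3" "card Q = 6"
    "P \<inter> Q = {}" "P \<union> Q = V - {v}"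
    by (rule stab_orbits_10[OF n v])
  have trans: "\<exists>h\<in>G. h v = v \<and> h x = y"
    if B: "B \<in> orb ?H ` V" and xy: "x \<in> B" "y \<in> B" for B x y
  proof -
    obtain w where "B = orb ?H w" using B by blast
    hence "y \<in> orb ?H x" using H.orb_eq[of x w] xy by simp
    thus ?thesis by (auto simp: orb_def stab_def)
  qed
  have uniform: "(\<forall>x\<in>B. E v x) \<or> (\<forall>x\<in>B. \<not> E v x)" if B: "B \<in> orb ?H ` V" for B
  proof -
    obtain w where "w \<in> V" "B = orb ?H w" using B by blast
    thus ?thesis using adjacency_stab_invariant[OF v] by blast
  qed
  have irr: "\<not> E v v" using simple by (simp add: simple_graph_def)
  have far: "V - insert v P = Q" "V - insert v Q = P" using PQ(5,6) by auto
  consider "\<forall>x\<in>P. E v x" "\<forall>x\<in>Q. E v x" | "\<forall>x\<in>P. \<not> E v x" "\<forall>x\<in>Q. \<not> E v x"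
    | "\<forall>x\<in>P. E v x" "\<forall>x\<in>Q. \<not> E v x" | "\<forall>x\<in>P. \<not> E v x" "\<forall>x\<in>Q. E v x"
    using uniform[OF PQ(1)] uniform[OF PQ(2)] by blast
  thus False
  proof cases
    case 1
    hence "E v w \<longleftrightarrow> True \<and> w \<noteq> v" if "w \<in> V" for w using that PQ(6) irr by blast
    thus False by (rule not_uniform_nbhd[OF v])
  next
    case 2
    hence "E v w \<longleftrightarrow> False \<and> w \<noteq> v" if "w \<in> V" for w using that PQ(6) irr by blast
    thus False by (rule not_uniform_nbhd[OF v])
  next
    case 3
    hence "nbhd V E v = P" using PQ(5,6) irr by (auto simp: nbhd_def)
    thus False using no_rank3_cubic_graph[OF simple refl v n] PQ(3) far trans PQ(1,2) by simp
  next
    case 4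
    hence "nbhd V (complement_graph V E) v = P"
      using PQ(5,6) v by (auto simp: nbhd_def complement_graph_def)
    thus False
      using no_rank3_cubic_graph[OF simple_graph_complement[OF simple] graph_auts_complement[OF simple] v n]
        PQ(3) far trans PQ(1,2) by simp
  qed
qed

lemma stab_elems_involutions_15:
  assumes n: "card V = 15" and x: "x \<in> V" and g: "g \<in> stab G x" "g \<noteq> id"
  shows "g \<in> elems_of_order G 2"
proof -
  have fin: "finite (elems_of_order G p)" for p
    using finite_subset[OF _ finite_H] by (auto simp: elems_of_order_def)
  have "3 \<le> card (fix_points V t)" if "t \<in> elems_of_order G 2" for t
    using involution_moves_multiple_of_4[OF that] n by presburger
  hence "3 * 15 \<le> (\<Sum>t\<in>elems_of_order G 2. card (fix_points V t))"
    using sum_bounded_below[of "elems_of_order G 2" 3 "\<lambda>t. card (fix_points V t)"]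
      card_elems_of_order(1) by simp
  hence "(\<Sum>h\<in>elems_of_order G 3. card (fix_points V h)) = 0"
    "(\<Sum>h\<in>elems_of_order G 5. card (fix_points V h)) = 0"
    using burnside_G n by simp_all
  hence "g \<notin> elems_of_order G 3" "g \<notin> elems_of_order G 5"
    using card_fix_points_pos[OF x g(1)] fin by auto
  thus ?thesis using elem_orders g by (auto simp: stab_def)
qed

lemma stab_eq_centralizer_15:
  assumes n: "card V = 15" and x: "x \<in> V" and t: "t \<in> stab G x" "t \<noteq> id"
  shows "stab G x = centralizer G t"
proof -
  have square: "g \<circ> g = id" if "g \<in> stab G x" for g
    using stab_elems_involutions_15[OF n x that]
    by (cases "g = id") (auto simp: elems_of_order_def numeral_2_eq_2)
  have "g \<circ> t = t \<circ> g" if g: "g \<in> stab G x" for g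
  proof -
    have gt: "g \<circ> t \<in> stab G x" using perm_group.comp_mem[OF perm_group_stab g t(1)] .
    show ?thesis
    proof
      fix y
      have "g (t (g (t (t (g y))))) = t (g y)" using fun_cong[OF square[OF gt]] by simp
      thus "(g \<circ> t) y = (t \<circ> g) y" using fun_cong[OF square[OF g]] fun_cong[OF square[OF t(1)]] by simp
    qed
  qed
  hence "stab G x \<subseteq> centralizer G t" by (auto simp: stab_def centralizer_def)
  moreover have "card (stab G x) = card (centralizer G t)"
    using card_stab[OF x] n card_centralizer_involution stab_elems_involutions_15[OF n x t] by simp
  moreover have "finite (centralizer G t)"
    using finite_subset[OF _ finite_H] by (auto simp: centralizer_def)
  ultimately show ?thesis using card_subset_eq by blast
qed

text \<open>Every point outside the common fixed points of \<open>H = G\<^sub>v\<close> has a regular \<open>H\<close>-orbit,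
  since a point stabiliser in \<open>H\<close> is the centraliser of any of its involutions; so the number of
  common fixed points is congruent to \<open>15\<close> modulo \<open>4\<close>.\<close>
lemma imprimitive_if_card_V_15:
  assumes n: "card V = 15"
  shows "imprimitive G V"
proof -
  obtain v where v: "v \<in> V" using card_V_ge_5 by fastforce
  let ?H = "stab G v" and ?F = "common_fix_points V (stab G v)"
  interpret H: perm_group V ?H by (rule perm_group_stab)
  have card_H: "card ?H = 4" using card_stab[OF v] n by simp
  have fin_H: "finite ?H" using finite_subset[OF _ finite_H] by (auto simp: stab_def)
  have "4 dvd card (orb ?H x)" if x: "x \<in> V - ?F" for x
  proof -
    have "stab ?H x \<subseteq> {id}"
    proof
      fix t assume t: "t \<in> stab ?H x"
      show "t \<in> {id}"
      proof (rule ccontr)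
        assume "t \<notin> {id}"
        moreover have "t \<in> ?H" "t \<in> stab G x" using t by (auto simp: stab_def)
        moreover have "x \<in> V" using x by blast
        ultimately have "?H = stab G x"
          using stab_eq_centralizer_15[OF n v] stab_eq_centralizer_15[OF n] by (metis singletonI)
        hence "x \<in> ?F" using x by (auto simp: common_fix_points_def stab_def)
        thus False using x by blast
      qed
    qed
    hence "stab ?H x = {id}" using H.id_mem by (auto simp: stab_def)
    moreover have "x \<in> V" using x by blast
    ultimately show ?thesis using H.card_orb_mult_card_stab[OF fin_H] card_H by fastforce
  qed
  hence "4 dvd card (V - ?F)" by (rule H.dvd_card_non_fixed[OF finite_X])
  moreover have "card (V - ?F) = card V - card ?F"
    using finite_X by (intro card_Diff_subset) (auto simp: common_fix_points_def)
  moreover have "v \<in> ?F" using v by (simp add: common_fix_points_def stab_def)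
  hence "card ?F \<noteq> 0" using finite_X by (auto simp: common_fix_points_def)
  moreover have "card ?F \<le> card V" using finite_X by (intro card_mono) (auto simp: common_fix_points_def)
  ultimately have "2 \<le> card ?F" using n by presburger
  moreover have "?H \<noteq> {id}" using card_H by auto
  ultimately show ?thesis using imprimitive_if_common_fix_points[OF v] by blast
qed

lemma card_stab_cases:
  assumes "v \<in> V"
  shows "card (stab G v) \<in> {1, 2, 3, 4, 5, 6, 10, 12}"
proof -
  have prod: "card V * card (stab G v) = 60" by (rule card_stab[OF assms])
  hence "5 * card (stab G v) \<le> 60" using mult_le_mono1[OF card_V_ge_5] by metis
  moreover have "card (stab G v) \<noteq> 0" using prod by (metis mult_0_right zero_neq_numeral)
  ultimately have "card (stab G v) \<in> {1..12}" by auto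
  hence "card (stab G v) \<in> {1, 2, 3, 4, 5, 6, 7, 8, 9, 10, 11, 12}"
    by (simp add: atLeastAtMost_iff) presburger
  thus ?thesis using prod by (elim insertE; simp; presburger)
qed

end

theorem mainTheorem11:
  fixes V :: "'a set" and E :: "'a \<Rightarrow> 'a \<Rightarrow> bool"
  assumes "finite V" and "simple_graph V E"
    and "vertex_transitive V E"
    and "Aut V E \<cong> alt_group 5"
  shows "imprimitive (graph_auts V E) V"
proof -
  interpret A5_graph V E using assms by unfold_locales
  obtain v where v: "v \<in> V" using card_V_ge_5 by fastforce
  have n: "card V * card (stab G v) = 60" by (rule card_stab[OF v])
  consider "card (stab G v) = 1" | "card (stab G v) \<in> {2, 3, 5}" | "card (stab G v) = 4"
    | "card (stab G v) \<in> {6, 10, 12}"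
    using card_stab_cases[OF v] by blast
  thus ?thesis
  proof cases
    case 1
    obtain t where "t \<in> elems_of_order G 2" using card_elems_of_order(1) by fastforce
    thus ?thesis using imprimitive_if_regular n card_G 1
      by (auto simp: elems_of_order_def numeral_2_eq_2)
  next
    case 2
    thus ?thesis using imprimitive_if_prime_power_stab[OF v, of _ 1] n by auto
  next
    case 3
    thus ?thesis using imprimitive_if_card_V_15 n by simp
  next
    case 4
    thus ?thesis using card_V_ne_5 card_V_ne_6 card_V_ne_10 n by auto
  qed
qed

end
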